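(* Let $\Sigma$ be a ranked set and $L\subseteq\mathsf{H}_0\Sigma$. The following are equivalent: (1) $L$ is recognised by an $\mathsf{H}$-algebra that is finite on every arity; (2) $L$ is recognised by (i.e. is a union of classes of) a congruence of the algebra $\mathsf{H}\Sigma$ with finitely many equivalence classes on every arity; (3) $L$ is recognised by an equivalence relation on $\mathsf{H}\Sigma$ that is compatible with all HR-operations and has finitely many equivalence classes on every arity.
   Context: A ranked set is a set in which each element has an arity in $\{0,1,2,\dots\}$; morphisms are arity-preserving functions. A sourced hypergraph of arity $n$ over $\Sigma$: finite vertex set, finite ranked set of hyperedges labelled arity-preservingly by $\Sigma$, incidence mapping each $m$-ary hyperedge $e$ to a non-repeating list $e[1],\dots,e[m]$ of vertices, injective source function $\{1,\dots,n\}\to$ vertices. $\mathsf{H}\Sigma$: such objects up to isomorphism; $\mathsf{H}_0\Sigma$: the arity-0 ones. Unit of $n$-ary $a$: vertices $1..n$ (identity sources), one hyperedge labelled $a$ with incidence $[1,\dots,n]$. Flattening of $G\in\mathsf{H}\mathsf{H}\Sigma$: hyperedges are pairs $(e,f)$ with $e$ a hyperedge of $G$ and $f$ a hyperedge of the label of $e$ (label from $f$); vertices are vertices of $G$ and pairs $(e,v)$ with $v$ a non-source vertex of the label of $e$; sources from $G$; the incidence of $(e,f)$ is that of $f$ with $v\mapsto(e,v)$ for non-sources and $v\mapsto e[i]$ if $v$ is the $i$-th source of the label of $e$. An $\mathsf{H}$-algebra is a ranked set $A$ with arity-preserving $\pi:\mathsf{H}A\to A$ such that $\pi(\mathrm{unit}\,a)=a$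 and $\pi\circ\mathsf{H}\pi=\pi\circ\mathrm{flatten}$ (with $\mathsf{H}\pi$ acting by relabelling); homomorphisms $h$ satisfy $h\circ\pi_A=\pi_B\circ\mathsf{H}h$. $\mathsf{H}\Sigma$ is an algebra with flattening as product. $L$ is recognised by $\mathcal{A}$ if $L=h^{-1}(F)\cap\mathsf{H}_0\Sigma$ for some homomorphism $h:\mathsf{H}\Sigma\to\mathcal{A}$ and set $F$. For a ranked set $X$ of variables and $t\in\mathsf{H}(\mathsf{H}\Sigma+X)$, the polynomial operation $(\mathsf{H}\Sigma)^X\to\mathsf{H}\Sigma$ maps an arity-preserving valuation $\eta$ to the flattening of $t$ with every label $x\in X$ replaced by $\eta(x)$. An equivalence relation on $\mathsf{H}\Sigma$ is compatible with an operation if componentwise equivalent inputs give equivalent outputs; a congruence is an equivalence relation compatible with all polynomial operations. The HR-operations are: for each $n$, parallel composition of two $n$-ary sourced hypergraphs (disjoint union with corresponding sources fused); for each $n$, the operation adding a new isolated vertex that becomes source $n+1$; a constant for the empty hypergraph (arity 0) and a constant for the unit of each $a\in\Sigma$; for each injective $f:\{1,\dots,k\}\to\{1,\dots,n\}$, the operation mapping an $n$-ary sourced hypergraph to the $k$-ary one whose source function is the old source function composed with $f$. *)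

theory Defs
  imports Main "HOL-Library.Nat_Bijection"
begin

(* The sources are a distinct list (position i-1 = i-th source), so the arity
   is the length of that list.  Elements of H Sigma are isomorphism classes;
   we work with concrete representatives and isomorphism-invariant notions. *)
record 'l shg =
  hV :: "nat set"
  hE :: "nat set"
  hlab :: "nat \<Rightarrow> 'l"
  hinc :: "nat \<Rightarrow> nat list"
  hsrc :: "nat list"

definition hg_ar :: "'l shg \<Rightarrow> nat" where
  "hg_ar G = length (hsrc G)"

definition wf_hg :: "'l set \<Rightarrow> ('l \<Rightarrow> nat) \<Rightarrow> 'l shg \<Rightarrow> bool" where
  "wf_hg C ar G \<longleftrightarrow> finite (hV G) \<and> finite (hE G) \<and> distinct (hsrc G) \<and> set (hsrc G) \<subseteq> hV G \<and>
     (\<forall>e\<in>hE G. hlab G e \<in> C \<and> distinct (hinc G e) \<and> set (hinc G e) \<subseteq> hV G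
                 \<and> length (hinc G e) = ar (hlab G e))"

definition hg_iso :: "'l shg \<Rightarrow> 'l shg \<Rightarrow> bool" where
  "hg_iso G G' \<longleftrightarrow> (\<exists>\<phi> \<psi>. bij_betw \<phi> (hV G) (hV G') \<and> bij_betw \<psi> (hE G) (hE G') \<and>
     (\<forall>e\<in>hE G. hlab G' (\<psi> e) = hlab G e \<and> hinc G' (\<psi> e) = map \<phi> (hinc G e)) \<and>
     hsrc G' = map \<phi> (hsrc G))"

definition HH :: "'s set \<Rightarrow> ('s \<Rightarrow> nat) \<Rightarrow> 's shg set" where
  "HH S ar = {G. wf_hg S ar G}"

definition hg_unit :: "('l \<Rightarrow> nat) \<Rightarrow> 'l \<Rightarrow> 'l shg" where
  "hg_unit ar a = \<lparr>hV = {..<ar a}, hE = {0}, hlab = (\<lambda>_. a), hinc = (\<lambda>_. [0..<ar a]),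
                   hsrc = [0..<ar a]\<rparr>"

definition relabel :: "('l \<Rightarrow> 'm) \<Rightarrow> 'l shg \<Rightarrow> 'm shg" where
  "relabel f G = \<lparr>hV = hV G, hE = hE G, hlab = f \<circ> hlab G, hinc = hinc G, hsrc = hsrc G\<rparr>"

definition vL :: "nat \<Rightarrow> nat" where "vL v = sum_encode (Inl v)"
definition vR :: "nat \<Rightarrow> nat \<Rightarrow> nat" where "vR e v = sum_encode (Inr (prod_encode (e, v)))"

definition src_index :: "nat list \<Rightarrow> nat \<Rightarrow> nat" where
  "src_index s v = (THE i. i < length s \<and> s ! i = v)"

definition fl_vmap :: "'l shg shg \<Rightarrow> nat \<Rightarrow> nat \<Rightarrow> nat" where
  "fl_vmap G e v = (if v \<in> set (hsrc (hlab G e))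
                    then vL (hinc G e ! src_index (hsrc (hlab G e)) v) else vR e v)"

(* flattening; vertex (e,v) encoded as vR e v, old vertex v as vL v,
   hyperedge (e,f) encoded as prod_encode (e,f) *)
definition flatten :: "'l shg shg \<Rightarrow> 'l shg" where
  "flatten G = \<lparr>hV = vL ` hV G \<union> {vR e v | e v. e \<in> hE G \<and> v \<in> hV (hlab G e) - set (hsrc (hlab G e))},
     hE = {prod_encode (e, f) | e f. e \<in> hE G \<and> f \<in> hE (hlab G e)},
     hlab = (\<lambda>x. case prod_decode x of (e, f) \<Rightarrow> hlab (hlab G e) f),
     hinc = (\<lambda>x. case prod_decode x of (e, f) \<Rightarrow> map (fl_vmap G e) (hinc (hlab G e) f)),
     hsrc = map vL (hsrc G)\<rparr>"

(* H-algebra with carrier A, arity arA and product \<pi> (defined on representatives,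
   required to be isomorphism invariant) *)
definition H_algebra :: "'a set \<Rightarrow> ('a \<Rightarrow> nat) \<Rightarrow> ('a shg \<Rightarrow> 'a) \<Rightarrow> bool" where
  "H_algebra A arA \<pi> \<longleftrightarrow>
     (\<forall>G. wf_hg A arA G \<longrightarrow> \<pi> G \<in> A \<and> arA (\<pi> G) = hg_ar G) \<and>
     (\<forall>G G'. wf_hg A arA G \<longrightarrow> hg_iso G G' \<longrightarrow> \<pi> G = \<pi> G') \<and>
     (\<forall>a\<in>A. \<pi> (hg_unit arA a) = a) \<and>
     (\<forall>G. wf_hg (HH A arA) hg_ar G \<longrightarrow> \<pi> (relabel \<pi> G) = \<pi> (flatten G))"

definition finite_per_arity :: "'a set \<Rightarrow> ('a \<Rightarrow> nat) \<Rightarrow> bool" where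
  "finite_per_arity A arA \<longleftrightarrow> (\<forall>n. finite {a\<in>A. arA a = n})"

(* homomorphism from the free algebra H Sigma (product = flatten) to (A, arA, \<pi>) *)
definition H_hom :: "'s set \<Rightarrow> ('s \<Rightarrow> nat) \<Rightarrow> 'a set \<Rightarrow> ('a \<Rightarrow> nat) \<Rightarrow> ('a shg \<Rightarrow> 'a)
                      \<Rightarrow> ('s shg \<Rightarrow> 'a) \<Rightarrow> bool" where
  "H_hom S ar A arA \<pi> h \<longleftrightarrow>
     (\<forall>G\<in>HH S ar. h G \<in> A \<and> arA (h G) = hg_ar G) \<and>
     (\<forall>G\<in>HH S ar. \<forall>G'. hg_iso G G' \<longrightarrow> h G = h G') \<and>
     (\<forall>G. wf_hg (HH S ar) hg_ar G \<longrightarrow> h (flatten G) = \<pi> (relabel h G))"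

definition recognised_by_alg :: "'s set \<Rightarrow> ('s \<Rightarrow> nat) \<Rightarrow> 's shg set \<Rightarrow> 'a set \<Rightarrow> ('a \<Rightarrow> nat)
                                  \<Rightarrow> ('a shg \<Rightarrow> 'a) \<Rightarrow> bool" where
  "recognised_by_alg S ar L A arA \<pi> \<longleftrightarrow>
     (\<exists>h F. H_hom S ar A arA \<pi> h \<and> L = {G \<in> HH S ar. hg_ar G = 0 \<and> h G \<in> F})"

(* equivalence relation on the ranked set H Sigma: an arity preserving equivalence on
   representatives that identifies isomorphic hypergraphs *)
definition ranked_equiv :: "'s set \<Rightarrow> ('s \<Rightarrow> nat) \<Rightarrow> ('s shg \<times> 's shg) set \<Rightarrow> bool" where
  "ranked_equiv S ar R \<longleftrightarrow> equiv (HH S ar) R \<and>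
     (\<forall>G\<in>HH S ar. \<forall>G'. hg_iso G G' \<longrightarrow> (G, G') \<in> R) \<and>
     (\<forall>G G'. (G, G') \<in> R \<longrightarrow> hg_ar G = hg_ar G')"

definition finite_index :: "'s set \<Rightarrow> ('s \<Rightarrow> nat) \<Rightarrow> ('s shg \<times> 's shg) set \<Rightarrow> bool" where
  "finite_index S ar R \<longleftrightarrow> (\<forall>n. finite ({G \<in> HH S ar. hg_ar G = n} // R))"

definition rel_recognises :: "'s shg set \<Rightarrow> ('s shg \<times> 's shg) set \<Rightarrow> bool" where
  "rel_recognises L R \<longleftrightarrow> (\<forall>G G'. (G, G') \<in> R \<longrightarrow> G \<in> L \<longrightarrow> G' \<in> L)"

(* polynomial operations; variables are natural numbers with arity arX *)
definition poly_op :: "('s shg + nat) shg \<Rightarrow> (nat \<Rightarrow> 's shg) \<Rightarrow> 's shg" where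
  "poly_op t \<eta> = flatten (relabel (case_sum id \<eta>) t)"

definition valuation :: "'s set \<Rightarrow> ('s \<Rightarrow> nat) \<Rightarrow> (nat \<Rightarrow> nat) \<Rightarrow> (nat \<Rightarrow> 's shg) \<Rightarrow> bool" where
  "valuation S ar arX \<eta> \<longleftrightarrow> (\<forall>x. \<eta> x \<in> HH S ar \<and> hg_ar (\<eta> x) = arX x)"

definition congruence :: "'s set \<Rightarrow> ('s \<Rightarrow> nat) \<Rightarrow> ('s shg \<times> 's shg) set \<Rightarrow> bool" where
  "congruence S ar R \<longleftrightarrow> ranked_equiv S ar R \<and>
     (\<forall>arX t \<eta> \<eta>'. wf_hg (HH S ar <+> UNIV) (case_sum hg_ar arX) t \<longrightarrow>
        valuation S ar arX \<eta> \<longrightarrow> valuation S ar arX \<eta>' \<longrightarrow> (\<forall>x. (\<eta> x, \<eta>' x) \<in> R) \<longrightarrow>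
        (poly_op t \<eta>, poly_op t \<eta>') \<in> R)"

definition par_vmap :: "'l shg \<Rightarrow> 'l shg \<Rightarrow> nat \<Rightarrow> nat" where
  "par_vmap G H v = (if v \<in> set (hsrc H) then vL (hsrc G ! src_index (hsrc H) v)
                     else sum_encode (Inr v))"

definition hg_par :: "'l shg \<Rightarrow> 'l shg \<Rightarrow> 'l shg" where
  "hg_par G H = \<lparr>hV = vL ` hV G \<union> (\<lambda>v. sum_encode (Inr v)) ` (hV H - set (hsrc H)),
     hE = (\<lambda>e. sum_encode (Inl e)) ` hE G \<union> (\<lambda>e. sum_encode (Inr e)) ` hE H,
     hlab = (\<lambda>x. case sum_decode x of Inl e \<Rightarrow> hlab G e | Inr e \<Rightarrow> hlab H e),
     hinc = (\<lambda>x. case sum_decode x of Inl e \<Rightarrow> map vL (hinc G e)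
                                   | Inr e \<Rightarrow> map (par_vmap G H) (hinc H e)),
     hsrc = map vL (hsrc G)\<rparr>"

definition hg_addv :: "'l shg \<Rightarrow> 'l shg" where
  "hg_addv G = \<lparr>hV = vL ` hV G \<union> {sum_encode (Inr 0)}, hE = hE G, hlab = hlab G,
     hinc = (\<lambda>e. map vL (hinc G e)), hsrc = map vL (hsrc G) @ [sum_encode (Inr 0)]\<rparr>"

definition hg_empty :: "'l shg" where
  "hg_empty = \<lparr>hV = {}, hE = {}, hlab = (\<lambda>_. undefined), hinc = (\<lambda>_. []), hsrc = []\<rparr>"

(* source renaming along an injective f : {1..k} -> {1..n}, given as the distinct
   list fs = [f 1 - 1, ..., f k - 1] of 0-based positions *)
definition hg_restrict :: "nat list \<Rightarrow> 'l shg \<Rightarrow> 'l shg" where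
  "hg_restrict fs G = G\<lparr>hsrc := map (\<lambda>i. hsrc G ! i) fs\<rparr>"

definition HR_compatible :: "'s set \<Rightarrow> ('s \<Rightarrow> nat) \<Rightarrow> ('s shg \<times> 's shg) set \<Rightarrow> bool" where
  "HR_compatible S ar R \<longleftrightarrow>
     (\<forall>G G' H H'. (G, G') \<in> R \<longrightarrow> (H, H') \<in> R \<longrightarrow> hg_ar G = hg_ar H \<longrightarrow>
        (hg_par G H, hg_par G' H') \<in> R) \<and>
     (\<forall>G G'. (G, G') \<in> R \<longrightarrow> (hg_addv G, hg_addv G') \<in> R) \<and>
     (hg_empty, hg_empty) \<in> R \<and>
     (\<forall>a\<in>S. (hg_unit ar a, hg_unit ar a) \<in> R) \<and>
     (\<forall>G G' fs. (G, G') \<in> R \<longrightarrow> distinct fs \<longrightarrow> set fs \<subseteq> {..<hg_ar G} \<longrightarrow>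
        (hg_restrict fs G, hg_restrict fs G') \<in> R)"

end

theory Submission
  imports Defs
begin

text \<open>
  (1) \<open>\<Rightarrow>\<close> (2): the kernel of a homomorphism into an algebra that is finite on every arity
  is a congruence of finite index, and \<open>L\<close> is a union of its classes.
  (2) \<open>\<Rightarrow>\<close> (1): the classes of a congruence form a quotient algebra, whose product flattens
  a hypergraph of chosen representatives; the class map is a homomorphism recognising \<open>L\<close>.
  (2) \<open>\<Leftrightarrow>\<close> (3): every HR-operation is a polynomial operation, given by a term with one or two
  variable hyperedges. Conversely, if all vertices of \<open>K\<close> are sources, removing one hyperedge
  \<open>e\<close> splits \<open>flatten K\<close> into the parallel composition of the flattening of the rest with
  the label of \<open>e\<close>, padded with fresh sources; source restrictions reduce the general case to
  this one. By induction on the number of hyperedges, an HR-compatible equivalence is compatible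
  with flattening, hence with all polynomial operations.
\<close>

lemma vL_eq_iff [simp]: "vL a = vL b \<longleftrightarrow> a = b"
  by (simp add: vL_def sum_encode_eq)

lemma vR_eq_iff [simp]: "vR e a = vR f b \<longleftrightarrow> e = f \<and> a = b"
  by (simp add: vR_def sum_encode_eq prod_encode_eq)

lemma vL_neq_vR [simp]: "vL a \<noteq> vR e b" "vR e b \<noteq> vL a"
  by (simp_all add: vL_def vR_def sum_encode_eq)

lemma vL_neq_Inr [simp]: "vL a \<noteq> sum_encode (Inr b)" "sum_encode (Inr b) \<noteq> vL a"
  by (simp_all add: vL_def sum_encode_eq)

lemma sum_encode_Inr_eq_iff [simp]: "sum_encode (Inr a) = sum_encode (Inr b) \<longleftrightarrow> a = b"
  by (simp add: sum_encode_eq)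

lemma sum_decode_vL [simp]: "sum_decode (vL a) = Inl a"
  by (simp add: vL_def)

lemma sum_decode_vR [simp]: "sum_decode (vR e a) = Inr (prod_encode (e, a))"
  by (simp add: vR_def)

lemma inj_on_vL [simp]: "inj_on vL A"
  by (simp add: inj_on_def)

lemma src_index_eqI: "distinct s \<Longrightarrow> i < length s \<Longrightarrow> s ! i = v \<Longrightarrow> src_index s v = i"
  unfolding src_index_def by (rule the_equality) (auto simp: nth_eq_iff_index_eq)

lemma src_index:
  "distinct s \<Longrightarrow> v \<in> set s \<Longrightarrow> src_index s v < length s \<and> s ! src_index s v = v"
  by (metis in_set_conv_nth src_index_eqI)

lemma src_index_nth: "distinct s \<Longrightarrow> i < length s \<Longrightarrow> src_index s (s ! i) = i"
  by (simp add: src_index_eqI)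

lemma src_index_append:
  "distinct (s @ t) \<Longrightarrow> v \<in> set s \<Longrightarrow> src_index (s @ t) v = src_index s v"
  by (metis distinct_append nth_append_left src_index src_index_eqI length_append trans_less_add1)

lemma src_index_map:
  "inj_on f (set s) \<Longrightarrow> distinct s \<Longrightarrow> v \<in> set s \<Longrightarrow> src_index (map f s) (f v) = src_index s v"
  by (metis distinct_map length_map nth_map src_index src_index_eqI)

lemma HH_iff [simp]: "G \<in> HH C ar \<longleftrightarrow> wf_hg C ar G"
  by (simp add: HH_def)

lemma Inl_in_Plus_iff [simp]: "Inl x \<in> A <+> B \<longleftrightarrow> x \<in> A"
  by auto

lemma wf_hgD:
  assumes "wf_hg C ar G"
  shows "finite (hV G)" "finite (hE G)" "distinct (hsrc G)" "set (hsrc G) \<subseteq> hV G"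
    "\<And>e. e \<in> hE G \<Longrightarrow> hlab G e \<in> C" "\<And>e. e \<in> hE G \<Longrightarrow> distinct (hinc G e)"
    "\<And>e. e \<in> hE G \<Longrightarrow> set (hinc G e) \<subseteq> hV G"
    "\<And>e. e \<in> hE G \<Longrightarrow> length (hinc G e) = ar (hlab G e)"
  using assms unfolding wf_hg_def by auto

lemma hg_isoI:
  assumes "bij_betw \<phi> (hV G) (hV G')" "bij_betw \<psi> (hE G) (hE G')"
    and "\<And>e. e \<in> hE G \<Longrightarrow> hlab G' (\<psi> e) = hlab G e \<and> hinc G' (\<psi> e) = map \<phi> (hinc G e)"
    and "hsrc G' = map \<phi> (hsrc G)"
  shows "hg_iso G G'"
  using assms unfolding hg_iso_def by blast

lemma hg_isoE:
  assumes "hg_iso G G'"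
  obtains \<phi> \<psi> \<phi>' \<psi>' where "bij_betw \<phi> (hV G) (hV G')" "bij_betw \<psi> (hE G) (hE G')"
    "\<forall>e\<in>hE G. hlab G' (\<psi> e) = hlab G e \<and> hinc G' (\<psi> e) = map \<phi> (hinc G e)"
    "hsrc G' = map \<phi> (hsrc G)"
    "\<forall>v\<in>hV G. \<phi> v \<in> hV G' \<and> \<phi>' (\<phi> v) = v" "\<forall>v\<in>hV G'. \<phi>' v \<in> hV G \<and> \<phi> (\<phi>' v) = v"
    "\<forall>e\<in>hE G. \<psi> e \<in> hE G' \<and> \<psi>' (\<psi> e) = e" "\<forall>e\<in>hE G'. \<psi>' e \<in> hE G \<and> \<psi> (\<psi>' e) = e"
proof -
  from assms obtain \<phi> \<psi> where b: "bij_betw \<phi> (hV G) (hV G')" "bij_betw \<psi> (hE G) (hE G')"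
    and "\<forall>e\<in>hE G. hlab G' (\<psi> e) = hlab G e \<and> hinc G' (\<psi> e) = map \<phi> (hinc G e)"
    and "hsrc G' = map \<phi> (hsrc G)"
    unfolding hg_iso_def by blast
  with b show ?thesis
    by (intro that[of \<phi> \<psi> "inv_into (hV G) \<phi>" "inv_into (hE G) \<psi>"])
      (auto simp: bij_betw_def inv_into_into f_inv_into_f)
qed

text \<open>Labels and incidences outside the edge set are junk values that isomorphisms ignore.\<close>

lemma hg_iso_agree_on_edges:
  assumes "hV G' = hV G" "hE G' = hE G" "hsrc G' = hsrc G"
    and "\<And>e. e \<in> hE G \<Longrightarrow> hlab G' e = hlab G e \<and> hinc G' e = hinc G e"
  shows "hg_iso G G'"
  by (rule hg_isoI[of id _ _ id]) (use assms in \<open>simp_all add: bij_betw_id\<close>)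

lemma hg_iso_sym:
  assumes wf: "wf_hg C ar G" and iso: "hg_iso G G'"
  shows "hg_iso G' G"
proof -
  obtain \<phi> \<psi> \<phi>' \<psi>' where "bij_betw \<phi> (hV G) (hV G')" "bij_betw \<psi> (hE G) (hE G')"
    and l: "\<forall>e\<in>hE G. hlab G' (\<psi> e) = hlab G e \<and> hinc G' (\<psi> e) = map \<phi> (hinc G e)"
    and s: "hsrc G' = map \<phi> (hsrc G)"
    and i: "\<forall>v\<in>hV G. \<phi> v \<in> hV G' \<and> \<phi>' (\<phi> v) = v" "\<forall>v\<in>hV G'. \<phi>' v \<in> hV G \<and> \<phi> (\<phi>' v) = v"
      "\<forall>e\<in>hE G. \<psi> e \<in> hE G' \<and> \<psi>' (\<psi> e) = e" "\<forall>e\<in>hE G'. \<psi>' e \<in> hE G \<and> \<psi> (\<psi>' e) = e"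
    using iso by (rule hg_isoE)
  show ?thesis
  proof (rule hg_isoI)
    show "bij_betw \<phi>' (hV G') (hV G)"
      using i(1,2) by (auto intro!: bij_betw_byWitness[where f' = \<phi>])
    show "bij_betw \<psi>' (hE G') (hE G)"
      using i(3,4) by (auto intro!: bij_betw_byWitness[where f' = \<psi>])
    fix e assume "e \<in> hE G'"
    with i(4) obtain d where d: "d \<in> hE G" "e = \<psi> d" by metis
    with i(3) have "\<psi>' e = d" by simp
    moreover have "set (hinc G d) \<subseteq> hV G" using wf_hgD(7)[OF wf d(1)] .
    ultimately show "hlab G (\<psi>' e) = hlab G' e \<and> hinc G (\<psi>' e) = map \<phi>' (hinc G' e)"
      using d l i(1) by (auto simp: subset_iff intro!: map_idI[symmetric])
  next
    show "hsrc G = map \<phi>' (hsrc G')"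
      using s i(1) wf_hgD(4)[OF wf] by (auto simp: subset_iff intro!: map_idI[symmetric])
  qed
qed

lemma hg_iso_trans:
  assumes "hg_iso G1 G2" "hg_iso G2 G3"
  shows "hg_iso G1 G3"
proof -
  obtain \<phi> \<psi> where b: "bij_betw \<phi> (hV G1) (hV G2)" "bij_betw \<psi> (hE G1) (hE G2)"
    and l: "\<forall>e\<in>hE G1. hlab G2 (\<psi> e) = hlab G1 e \<and> hinc G2 (\<psi> e) = map \<phi> (hinc G1 e)"
    and s: "hsrc G2 = map \<phi> (hsrc G1)"
    using assms(1) unfolding hg_iso_def by blast
  obtain \<phi>2 \<psi>2 where c: "bij_betw \<phi>2 (hV G2) (hV G3)" "bij_betw \<psi>2 (hE G2) (hE G3)"
    and l2: "\<forall>e\<in>hE G2. hlab G3 (\<psi>2 e) = hlab G2 e \<and> hinc G3 (\<psi>2 e) = map \<phi>2 (hinc G2 e)"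
    and s2: "hsrc G3 = map \<phi>2 (hsrc G2)"
    using assms(2) unfolding hg_iso_def by blast
  show ?thesis
  proof (rule hg_isoI[of "\<phi>2 \<circ> \<phi>" _ _ "\<psi>2 \<circ> \<psi>"])
    fix e assume "e \<in> hE G1"
    then show "hlab G3 ((\<psi>2 \<circ> \<psi>) e) = hlab G1 e \<and> hinc G3 ((\<psi>2 \<circ> \<psi>) e) = map (\<phi>2 \<circ> \<phi>) (hinc G1 e)"
      using l l2 bij_betw_apply[OF b(2)] by simp
  qed (use b c s s2 in \<open>auto intro: bij_betw_trans\<close>)
qed

lemma wf_hg_iso:
  assumes wf: "wf_hg C ar G" and iso: "hg_iso G G'"
  shows "wf_hg C ar G'"
proof -
  obtain \<phi> \<psi> where b: "bij_betw \<phi> (hV G) (hV G')" "bij_betw \<psi> (hE G) (hE G')"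
    and l: "\<forall>e\<in>hE G. hlab G' (\<psi> e) = hlab G e \<and> hinc G' (\<psi> e) = map \<phi> (hinc G e)"
    and s: "hsrc G' = map \<phi> (hsrc G)"
    using iso unfolding hg_iso_def by blast
  have inj: "inj_on \<phi> (hV G)" and img: "\<phi> ` hV G = hV G'"
    using b(1) by (auto simp: bij_betw_def)
  have "hlab G' e \<in> C \<and> distinct (hinc G' e) \<and> set (hinc G' e) \<subseteq> hV G'
        \<and> length (hinc G' e) = ar (hlab G' e)" if "e \<in> hE G'" for e
  proof -
    obtain d where "d \<in> hE G" "e = \<psi> d" using b(2) \<open>e \<in> hE G'\<close> by (auto simp: bij_betw_def)
    then show ?thesis
      using l wf_hgD(5-8)[OF wf] inj by (force simp: distinct_map inj_on_subset img[symmetric])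
  qed
  moreover have "finite (hV G')" "finite (hE G')"
    using wf_hgD(1,2)[OF wf] b bij_betw_finite by auto
  moreover have "distinct (hsrc G')" "set (hsrc G') \<subseteq> hV G'"
    using s wf_hgD(3,4)[OF wf] inj img by (auto simp: distinct_map inj_on_subset)
  ultimately show ?thesis unfolding wf_hg_def by blast
qed

lemma relabel_simps [simp]:
  "hV (relabel f G) = hV G" "hE (relabel f G) = hE G" "hlab (relabel f G) e = f (hlab G e)"
  "hinc (relabel f G) = hinc G" "hsrc (relabel f G) = hsrc G"
  by (simp_all add: relabel_def)

lemma hg_ar_relabel [simp]: "hg_ar (relabel f G) = hg_ar G"
  by (simp add: hg_ar_def)

lemma relabel_relabel: "relabel f (relabel g K) = relabel (f \<circ> g) K"
  by (simp add: relabel_def comp_assoc)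

lemma relabel_id: "relabel id K = K"
  by (simp add: relabel_def)

lemma wf_relabel:
  assumes "wf_hg C ar K"
    and "\<And>e. e \<in> hE K \<Longrightarrow> f (hlab K e) \<in> C' \<and> ar' (f (hlab K e)) = ar (hlab K e)"
  shows "wf_hg C' ar' (relabel f K)"
  using assms unfolding wf_hg_def by auto

lemma hg_iso_relabel:
  assumes "hg_iso K K'"
  shows "hg_iso (relabel f K) (relabel f K')"
proof -
  obtain \<phi> \<psi> where "bij_betw \<phi> (hV K) (hV K')" "bij_betw \<psi> (hE K) (hE K')"
    "\<forall>e\<in>hE K. hlab K' (\<psi> e) = hlab K e \<and> hinc K' (\<psi> e) = map \<phi> (hinc K e)"
    "hsrc K' = map \<phi> (hsrc K)"
    using assms unfolding hg_iso_def by blast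
  then show ?thesis by (intro hg_isoI[of \<phi> _ _ \<psi>]) simp_all
qed

lemma flatten_simps [simp]:
  "hV (flatten G) = vL ` hV G \<union> {vR e v | e v. e \<in> hE G \<and> v \<in> hV (hlab G e) - set (hsrc (hlab G e))}"
  "hE (flatten G) = {prod_encode (e, f) | e f. e \<in> hE G \<and> f \<in> hE (hlab G e)}"
  "hlab (flatten G) (prod_encode (e, f)) = hlab (hlab G e) f"
  "hinc (flatten G) (prod_encode (e, f)) = map (fl_vmap G e) (hinc (hlab G e) f)"
  "hsrc (flatten G) = map vL (hsrc G)"
  by (simp_all add: flatten_def)

lemma hg_ar_flatten [simp]: "hg_ar (flatten G) = hg_ar G"
  by (simp add: hg_ar_def)

lemma fl_vmap_src:
  "v \<in> set (hsrc (hlab G e)) \<Longrightarrow> fl_vmap G e v = vL (hinc G e ! src_index (hsrc (hlab G e)) v)"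
  by (simp add: fl_vmap_def)

lemma fl_vmap_nonsrc: "v \<notin> set (hsrc (hlab G e)) \<Longrightarrow> fl_vmap G e v = vR e v"
  by (simp add: fl_vmap_def)

lemma fl_vmap_cong: "hlab K' = hlab K \<Longrightarrow> hinc K' = hinc K \<Longrightarrow> fl_vmap K' = fl_vmap K"
  by (simp add: fl_vmap_def fun_eq_iff)

lemma fl_vmap_in_flatten:
  assumes wf: "wf_hg (HH C ar) hg_ar G" and e: "e \<in> hE G" and v: "v \<in> hV (hlab G e)"
  shows "fl_vmap G e v \<in> hV (flatten G)"
proof (cases "v \<in> set (hsrc (hlab G e))")
  case True
  have "src_index (hsrc (hlab G e)) v < length (hinc G e)"
    using src_index[OF wf_hgD(3) True] wf_hgD(5,8)[OF wf e] by (simp add: hg_ar_def)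
  then have "hinc G e ! src_index (hsrc (hlab G e)) v \<in> hV G"
    using wf_hgD(7)[OF wf e] nth_mem by blast
  then show ?thesis using True by (simp add: fl_vmap_src)
next
  case False
  then show ?thesis using e v by (auto simp: fl_vmap_nonsrc)
qed

lemma inj_on_fl_vmap:
  assumes wf: "wf_hg (HH C ar) hg_ar G" and e: "e \<in> hE G"
  shows "inj_on (fl_vmap G e) (hV (hlab G e))"
proof
  let ?s = "hsrc (hlab G e)"
  fix v w assume "v \<in> hV (hlab G e)" "w \<in> hV (hlab G e)" and eq: "fl_vmap G e v = fl_vmap G e w"
  have ds: "distinct ?s" using wf_hgD(5)[OF wf e] by (auto dest: wf_hgD(3))
  have len: "length (hinc G e) = length ?s" using wf_hgD(8)[OF wf e] by (simp add: hg_ar_def)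
  show "v = w"
  proof (cases "v \<in> set ?s \<and> w \<in> set ?s")
    case True
    then have "hinc G e ! src_index ?s v = hinc G e ! src_index ?s w"
      using eq by (simp add: fl_vmap_src)
    then have "src_index ?s v = src_index ?s w"
      using nth_eq_iff_index_eq[OF wf_hgD(6)[OF wf e]] src_index[OF ds] True len by auto
    then show ?thesis using src_index[OF ds] True by metis
  next
    case False
    then show ?thesis using eq by (auto simp: fl_vmap_def split: if_splits)
  qed
qed

lemma wf_flatten:
  assumes wf: "wf_hg (HH C ar) hg_ar G"
  shows "wf_hg C ar (flatten G)"
proof -
  have "finite (vL ` hV G \<union> (\<Union>e\<in>hE G. vR e ` hV (hlab G e)))"
    using wf_hgD(1,2,5)[OF wf] by (auto dest: wf_hgD(1))
  moreover have "hV (flatten G) \<subseteq> vL ` hV G \<union> (\<Union>e\<in>hE G. vR e ` hV (hlab G e))" by auto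
  ultimately have finV: "finite (hV (flatten G))" by (rule finite_subset[rotated])
  have "finite (\<Union>e\<in>hE G. (\<lambda>f. prod_encode (e, f)) ` hE (hlab G e))"
    using wf_hgD(2,5)[OF wf] by (auto dest: wf_hgD(2))
  moreover have "hE (flatten G) \<subseteq> (\<Union>e\<in>hE G. (\<lambda>f. prod_encode (e, f)) ` hE (hlab G e))" by auto
  ultimately have finE: "finite (hE (flatten G))" by (rule finite_subset[rotated])
  have "hlab (flatten G) x \<in> C \<and> distinct (hinc (flatten G) x) \<and>
      set (hinc (flatten G) x) \<subseteq> hV (flatten G) \<and> length (hinc (flatten G) x) = ar (hlab (flatten G) x)"
    if x: "x \<in> hE (flatten G)" for x
  proof -
    obtain e f where x: "x = prod_encode (e, f)" "e \<in> hE G" "f \<in> hE (hlab G e)"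
      using x by auto
    have wl: "wf_hg C ar (hlab G e)" using wf_hgD(5)[OF wf x(2)] by simp
    show ?thesis
      using x wf_hgD(5-8)[OF wl x(3)] fl_vmap_in_flatten[OF wf x(2)] inj_on_fl_vmap[OF wf x(2)]
      by (auto simp: distinct_map inj_on_subset)
  qed
  then show ?thesis
    unfolding wf_hg_def using finV finE wf_hgD(3,4)[OF wf] by (auto simp: distinct_map)
qed

lemma par_simps [simp]:
  "hV (hg_par G H) = vL ` hV G \<union> (\<lambda>v. sum_encode (Inr v)) ` (hV H - set (hsrc H))"
  "hE (hg_par G H) = vL ` hE G \<union> (\<lambda>e. sum_encode (Inr e)) ` hE H"
  "hlab (hg_par G H) (vL e) = hlab G e"
  "hlab (hg_par G H) (sum_encode (Inr e)) = hlab H e"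
  "hinc (hg_par G H) (vL e) = map vL (hinc G e)"
  "hinc (hg_par G H) (sum_encode (Inr e)) = map (par_vmap G H) (hinc H e)"
  "hsrc (hg_par G H) = map vL (hsrc G)"
  by (simp_all add: hg_par_def vL_def)

lemma par_vmap_in_par:
  assumes wG: "wf_hg C ar G" and wH: "wf_hg C ar H" and len: "hg_ar G = hg_ar H"
    and v: "v \<in> hV H"
  shows "par_vmap G H v \<in> hV (hg_par G H)"
proof (cases "v \<in> set (hsrc H)")
  case True
  have "src_index (hsrc H) v < length (hsrc G)"
    using src_index[OF wf_hgD(3)[OF wH] True] len by (simp add: hg_ar_def)
  then have "hsrc G ! src_index (hsrc H) v \<in> hV G" using wf_hgD(4)[OF wG] nth_mem by blast
  then show ?thesis using True by (simp add: par_vmap_def)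
qed (use v in \<open>simp add: par_vmap_def\<close>)

lemma inj_on_par_vmap:
  assumes wG: "wf_hg C ar G" and wH: "wf_hg C ar H" and len: "hg_ar G = hg_ar H"
  shows "inj_on (par_vmap G H) (hV H)"
proof
  let ?s = "hsrc H"
  fix v w assume "v \<in> hV H" "w \<in> hV H" and eq: "par_vmap G H v = par_vmap G H w"
  show "v = w"
  proof (cases "v \<in> set ?s \<and> w \<in> set ?s")
    case True
    then have "hsrc G ! src_index ?s v = hsrc G ! src_index ?s w"
      using eq by (simp add: par_vmap_def)
    then have "src_index ?s v = src_index ?s w"
      using nth_eq_iff_index_eq[OF wf_hgD(3)[OF wG]] src_index[OF wf_hgD(3)[OF wH]] True len
      by (auto simp: hg_ar_def)
    then show ?thesis using src_index[OF wf_hgD(3)[OF wH]] True by metis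
  next
    case False
    then show ?thesis using eq by (auto simp: par_vmap_def split: if_splits)
  qed
qed

lemma wf_par:
  assumes wG: "wf_hg C ar G" and wH: "wf_hg C ar H" and len: "hg_ar G = hg_ar H"
  shows "wf_hg C ar (hg_par G H)"
proof -
  have "hlab (hg_par G H) x \<in> C \<and> distinct (hinc (hg_par G H) x) \<and>
      set (hinc (hg_par G H) x) \<subseteq> hV (hg_par G H) \<and> length (hinc (hg_par G H) x) = ar (hlab (hg_par G H) x)"
    if x: "x \<in> hE (hg_par G H)" for x
  proof -
    consider (left) e where "x = vL e" "e \<in> hE G" | (right) e where "x = sum_encode (Inr e)" "e \<in> hE H"
      using x by auto
    then show ?thesis
    proof cases
      case left
      then show ?thesis using wf_hgD(5-8)[OF wG left(2)] by (auto simp: distinct_map)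
    next
      case right
      then show ?thesis
        using wf_hgD(5-8)[OF wH right(2)] par_vmap_in_par[OF wG wH len] inj_on_par_vmap[OF wG wH len]
        by (auto simp: distinct_map inj_on_subset)
    qed
  qed
  then show ?thesis
    unfolding wf_hg_def using wf_hgD(1-4)[OF wG] wf_hgD(1,2)[OF wH] by (auto simp: distinct_map)
qed

lemma wf_addv: "wf_hg C ar G \<Longrightarrow> wf_hg C ar (hg_addv G)"
  unfolding wf_hg_def hg_addv_def by (auto simp: distinct_map)

lemma wf_restrict:
  "wf_hg C ar G \<Longrightarrow> distinct fs \<Longrightarrow> set fs \<subseteq> {..<hg_ar G} \<Longrightarrow> wf_hg C ar (hg_restrict fs G)"
  unfolding wf_hg_def hg_restrict_def hg_ar_def
  by (auto simp: distinct_map inj_on_def subset_iff nth_eq_iff_index_eq)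

section \<open>Flattening\<close>

lemma relabel_flatten: "relabel f (flatten K) = flatten (relabel (relabel f) K)"
proof -
  have "fl_vmap (relabel (relabel f) K) = fl_vmap K" by (simp add: fl_vmap_def fun_eq_iff)
  then show ?thesis by (simp add: relabel_def flatten_def fun_eq_iff split: prod.splits)
qed

lemma restrict_flatten:
  assumes "set q \<subseteq> {..<length s}"
  shows "hg_restrict q (flatten (K\<lparr>hsrc := s\<rparr>)) = flatten (K\<lparr>hsrc := map (\<lambda>i. s ! i) q\<rparr>)"
proof -
  have "fl_vmap (K\<lparr>hsrc := s\<rparr>) = fl_vmap (K\<lparr>hsrc := map (\<lambda>i. s ! i) q\<rparr>)"
    by (rule fl_vmap_cong) simp_all
  then show ?thesis using assms by (simp add: hg_restrict_def flatten_def subset_iff)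
qed

definition flatten_vmap :: "(nat \<Rightarrow> nat) \<Rightarrow> (nat \<Rightarrow> nat) \<Rightarrow> nat \<Rightarrow> nat" where
  "flatten_vmap \<phi> \<psi> y = (case sum_decode y of
      Inl v \<Rightarrow> vL (\<phi> v)
    | Inr p \<Rightarrow> (case prod_decode p of (e, w) \<Rightarrow> vR (\<psi> e) w))"

definition flatten_emap :: "(nat \<Rightarrow> nat) \<Rightarrow> nat \<Rightarrow> nat" where
  "flatten_emap \<psi> x = (case prod_decode x of (e, f) \<Rightarrow> prod_encode (\<psi> e, f))"

lemma flatten_vmap_simps [simp]:
  "flatten_vmap \<phi> \<psi> (vL v) = vL (\<phi> v)" "flatten_vmap \<phi> \<psi> (vR e w) = vR (\<psi> e) w"
  by (simp_all add: flatten_vmap_def)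

lemma flatten_emap_simps [simp]: "flatten_emap \<psi> (prod_encode (e, f)) = prod_encode (\<psi> e, f)"
  by (simp add: flatten_emap_def)

lemma fl_vmap_iso:
  assumes wf: "wf_hg (HH C ar) hg_ar G" and e: "e \<in> hE G"
    and l: "hlab G' (\<psi> e) = hlab G e" "hinc G' (\<psi> e) = map \<phi> (hinc G e)"
  shows "fl_vmap G' (\<psi> e) v = flatten_vmap \<phi> \<psi> (fl_vmap G e v)"
proof (cases "v \<in> set (hsrc (hlab G e))")
  case True
  have "src_index (hsrc (hlab G e)) v < length (hinc G e)"
    using src_index[OF wf_hgD(3) True] wf_hgD(5,8)[OF wf e] by (simp add: hg_ar_def)
  then show ?thesis using True l by (simp add: fl_vmap_src)
qed (use l in \<open>simp add: fl_vmap_nonsrc\<close>)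

lemma hg_iso_flatten:
  assumes wf: "wf_hg (HH C ar) hg_ar G" and iso: "hg_iso G G'"
  shows "hg_iso (flatten G) (flatten G')"
proof -
  obtain \<phi> \<psi> \<phi>' \<psi>' where "bij_betw \<phi> (hV G) (hV G')" "bij_betw \<psi> (hE G) (hE G')"
    and l: "\<forall>e\<in>hE G. hlab G' (\<psi> e) = hlab G e \<and> hinc G' (\<psi> e) = map \<phi> (hinc G e)"
    and s: "hsrc G' = map \<phi> (hsrc G)"
    and i: "\<forall>v\<in>hV G. \<phi> v \<in> hV G' \<and> \<phi>' (\<phi> v) = v" "\<forall>v\<in>hV G'. \<phi>' v \<in> hV G \<and> \<phi> (\<phi>' v) = v"
      "\<forall>e\<in>hE G. \<psi> e \<in> hE G' \<and> \<psi>' (\<psi> e) = e" "\<forall>e\<in>hE G'. \<psi>' e \<in> hE G \<and> \<psi> (\<psi>' e) = e"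
    using iso by (rule hg_isoE)
  have lab: "\<And>e. e \<in> hE G \<Longrightarrow> hlab G' (\<psi> e) = hlab G e" using l by blast
  have lab': "\<And>e. e \<in> hE G' \<Longrightarrow> hlab G (\<psi>' e) = hlab G' e" using lab i(4) by metis
  show ?thesis
  proof (rule hg_isoI[of "flatten_vmap \<phi> \<psi>" _ _ "flatten_emap \<psi>"])
    show "bij_betw (flatten_vmap \<phi> \<psi>) (hV (flatten G)) (hV (flatten G'))"
      by (rule bij_betw_byWitness[where f' = "flatten_vmap \<phi>' \<psi>'"]) (use i lab lab' in fastforce)+
    show "bij_betw (flatten_emap \<psi>) (hE (flatten G)) (hE (flatten G'))"
      by (rule bij_betw_byWitness[where f' = "flatten_emap \<psi>'"]) (use i(3,4) lab lab' in fastforce)+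
    fix x assume "x \<in> hE (flatten G)"
    then obtain e f where x: "x = prod_encode (e, f)" "e \<in> hE G" "f \<in> hE (hlab G e)" by auto
    then show "hlab (flatten G') (flatten_emap \<psi> x) = hlab (flatten G) x \<and>
        hinc (flatten G') (flatten_emap \<psi> x) = map (flatten_vmap \<phi> \<psi>) (hinc (flatten G) x)"
      using l fl_vmap_iso[OF wf x(2)] by simp
  qed (use s in simp)
qed

text \<open>The two sides of associativity of flattening differ only in how nested names are encoded:
  the vertices \<open>vL (vL v)\<close>, \<open>vL (vR e w)\<close>, \<open>vR (e, f) u\<close> of \<open>flatten (flatten K)\<close> correspond to
  \<open>vL v\<close>, \<open>vR e (vL w)\<close>, \<open>vR e (vR f u)\<close>, and the edges \<open>((e, f), g)\<close> to \<open>(e, (f, g))\<close>.\<close>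

definition assoc_vmap :: "nat \<Rightarrow> nat" where
  "assoc_vmap y = (case sum_decode y of
      Inl a \<Rightarrow> (case sum_decode a of
                  Inl v \<Rightarrow> vL v
                | Inr p \<Rightarrow> (case prod_decode p of (e, w) \<Rightarrow> vR e (vL w)))
    | Inr p \<Rightarrow> (case prod_decode p of (x, u) \<Rightarrow> (case prod_decode x of (e, f) \<Rightarrow> vR e (vR f u))))"

definition assoc_vmap_inv :: "nat \<Rightarrow> nat" where
  "assoc_vmap_inv y = (case sum_decode y of
      Inl v \<Rightarrow> vL (vL v)
    | Inr p \<Rightarrow> (case prod_decode p of (e, x) \<Rightarrow> (case sum_decode x of
                  Inl w \<Rightarrow> vL (vR e w)
                | Inr q \<Rightarrow> (case prod_decode q of (f, u) \<Rightarrow> vR (prod_encode (e, f)) u))))"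

definition assoc_emap :: "nat \<Rightarrow> nat" where
  "assoc_emap x = (case prod_decode x of (y, g) \<Rightarrow>
      (case prod_decode y of (e, f) \<Rightarrow> prod_encode (e, prod_encode (f, g))))"

definition assoc_emap_inv :: "nat \<Rightarrow> nat" where
  "assoc_emap_inv x = (case prod_decode x of (e, y) \<Rightarrow>
      (case prod_decode y of (f, g) \<Rightarrow> prod_encode (prod_encode (e, f), g)))"

lemma assoc_vmap_simps [simp]:
  "assoc_vmap (vL (vL v)) = vL v" "assoc_vmap (vL (vR e w)) = vR e (vL w)"
  "assoc_vmap (vR (prod_encode (e, f)) u) = vR e (vR f u)"
  "assoc_vmap_inv (vL v) = vL (vL v)" "assoc_vmap_inv (vR e (vL w)) = vL (vR e w)"
  "assoc_vmap_inv (vR e (vR f u)) = vR (prod_encode (e, f)) u"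
  by (simp_all add: assoc_vmap_def assoc_vmap_inv_def)

lemma assoc_emap_simps [simp]:
  "assoc_emap (prod_encode (prod_encode (e, f), g)) = prod_encode (e, prod_encode (f, g))"
  "assoc_emap_inv (prod_encode (e, prod_encode (f, g))) = prod_encode (prod_encode (e, f), g)"
  by (simp_all add: assoc_emap_def assoc_emap_inv_def)

lemma hV_flatten_flatten_cases:
  assumes "a \<in> hV (flatten (flatten K))"
  obtains v where "a = vL (vL v)" "v \<in> hV K"
  | e w where "a = vL (vR e w)" "e \<in> hE K" "w \<in> hV (hlab K e)" "w \<notin> set (hsrc (hlab K e))"
  | e f u where "a = vR (prod_encode (e, f)) u" "e \<in> hE K" "f \<in> hE (hlab K e)"
      "u \<in> hV (hlab (hlab K e) f)" "u \<notin> set (hsrc (hlab (hlab K e) f))"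
  using assms by auto

lemma hV_flatten_relabel_flatten_cases:
  assumes "a \<in> hV (flatten (relabel flatten K))"
  obtains v where "a = vL v" "v \<in> hV K"
  | e w where "a = vR e (vL w)" "e \<in> hE K" "w \<in> hV (hlab K e)" "w \<notin> set (hsrc (hlab K e))"
  | e f u where "a = vR e (vR f u)" "e \<in> hE K" "f \<in> hE (hlab K e)"
      "u \<in> hV (hlab (hlab K e) f)" "u \<notin> set (hsrc (hlab (hlab K e) f))"
  using assms by (auto simp: inj_image_mem_iff[OF inj_on_vL])

lemma assoc_vmap_fl_vmap:
  assumes wf: "wf_hg (HH (HH C ar) hg_ar) hg_ar K"
    and e: "e \<in> hE K" and f: "f \<in> hE (hlab K e)" and u: "u \<in> hV (hlab (hlab K e) f)"
  shows "assoc_vmap (fl_vmap (flatten K) (prod_encode (e, f)) u)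
           = fl_vmap (relabel flatten K) e (fl_vmap (hlab K e) f u)"
proof -
  define Ke where "Ke = hlab K e"
  define Kef where "Kef = hlab Ke f"
  have wKe: "wf_hg (HH C ar) hg_ar Ke" using wf_hgD(5)[OF wf e] by (simp add: Ke_def)
  have fK: "f \<in> hE Ke" using f by (simp add: Ke_def)
  have wKef: "wf_hg C ar Kef" using wf_hgD(5)[OF wKe fK] by (simp add: Kef_def)
  show ?thesis
  proof (cases "u \<in> set (hsrc Kef)")
    case False
    moreover have "vR f u \<notin> set (hsrc (hlab (relabel flatten K) e))" by auto
    ultimately show ?thesis
      by (simp add: fl_vmap_nonsrc Ke_def[symmetric] Kef_def[symmetric])
  next
    case True
    define j where "j = src_index (hsrc Kef) u"
    have j: "j < length (hinc Ke f)"
      using src_index[OF wf_hgD(3)[OF wKef] True] wf_hgD(8)[OF wKe fK]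
      by (simp add: hg_ar_def j_def Kef_def)
    define w where "w = hinc Ke f ! j"
    have lhs: "fl_vmap (flatten K) (prod_encode (e, f)) u = vL (fl_vmap K e w)"
      using True j
      by (simp add: fl_vmap_src Ke_def[symmetric] Kef_def[symmetric] j_def[symmetric] w_def)
    have rhs: "fl_vmap (hlab K e) f u = vL w"
      using True by (simp add: fl_vmap_src Ke_def[symmetric] Kef_def[symmetric] j_def[symmetric] w_def)
    show ?thesis
    proof (cases "w \<in> set (hsrc Ke)")
      case True
      have "src_index (map vL (hsrc Ke)) (vL w) = src_index (hsrc Ke) w"
        by (rule src_index_map) (use True wf_hgD(3)[OF wKe] in auto)
      then show ?thesis using True lhs rhs by (simp add: fl_vmap_src Ke_def[symmetric])
    next
      case False
      then have "vL w \<notin> set (hsrc (hlab (relabel flatten K) e))" by (auto simp: Ke_def)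
      then show ?thesis using False lhs rhs by (simp add: fl_vmap_nonsrc Ke_def[symmetric])
    qed
  qed
qed

lemma flatten_flatten_iso:
  assumes wf: "wf_hg (HH (HH C ar) hg_ar) hg_ar K"
  shows "hg_iso (flatten (flatten K)) (flatten (relabel flatten K))"
proof (rule hg_isoI[of assoc_vmap _ _ assoc_emap])
  let ?E = "hE (flatten (flatten K))" and ?E' = "hE (flatten (relabel flatten K))"
  have E: "?E = {prod_encode (prod_encode (e, f), g) | e f g.
      e \<in> hE K \<and> f \<in> hE (hlab K e) \<and> g \<in> hE (hlab (hlab K e) f)}"
    by auto
  have E': "?E' = {prod_encode (e, prod_encode (f, g)) | e f g.
      e \<in> hE K \<and> f \<in> hE (hlab K e) \<and> g \<in> hE (hlab (hlab K e) f)}"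
    by auto
  show "bij_betw assoc_vmap (hV (flatten (flatten K))) (hV (flatten (relabel flatten K)))"
  proof (rule bij_betw_byWitness[where f' = assoc_vmap_inv])
    show "\<forall>a\<in>hV (flatten (flatten K)). assoc_vmap_inv (assoc_vmap a) = a"
      by (auto elim: hV_flatten_flatten_cases)
    show "\<forall>a\<in>hV (flatten (relabel flatten K)). assoc_vmap (assoc_vmap_inv a) = a"
      by (auto elim: hV_flatten_relabel_flatten_cases)
    show "assoc_vmap ` hV (flatten (flatten K)) \<subseteq> hV (flatten (relabel flatten K))"
      by (auto elim!: hV_flatten_flatten_cases simp: inj_image_mem_iff[OF inj_on_vL])
    show "assoc_vmap_inv ` hV (flatten (relabel flatten K)) \<subseteq> hV (flatten (flatten K))"
      by (auto elim!: hV_flatten_relabel_flatten_cases) blast+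
  qed
  show "bij_betw assoc_emap ?E ?E'"
    by (rule bij_betw_byWitness[where f' = assoc_emap_inv]) (unfold E E', fastforce+)
  fix x assume "x \<in> ?E"
  then obtain e f g where x: "x = prod_encode (prod_encode (e, f), g)" "e \<in> hE K"
    "f \<in> hE (hlab K e)" "g \<in> hE (hlab (hlab K e) f)"
    unfolding E by blast
  have "wf_hg C ar (hlab (hlab K e) f)"
    using wf_hgD(5)[OF wf x(2)] x(3) by (auto dest: wf_hgD(5))
  then have "set (hinc (hlab (hlab K e) f) g) \<subseteq> hV (hlab (hlab K e) f)"
    using x(4) by (rule wf_hgD(7))
  then show "hlab (flatten (relabel flatten K)) (assoc_emap x) = hlab (flatten (flatten K)) x \<and>
      hinc (flatten (relabel flatten K)) (assoc_emap x) = map assoc_vmap (hinc (flatten (flatten K)) x)"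
    using x assoc_vmap_fl_vmap[OF wf x(2,3)] by (auto simp: subset_iff)
qed simp

section \<open>Splitting off a hyperedge\<close>

definition fresh_bound :: "'l shg \<Rightarrow> nat" where
  "fresh_bound G = Suc (Max (insert 0 (hV G)))"

lemma less_fresh_bound: "finite (hV G) \<Longrightarrow> v \<in> hV G \<Longrightarrow> v < fresh_bound G"
  unfolding fresh_bound_def by (simp add: le_imp_less_Suc)

definition hg_fresh :: "'l shg \<Rightarrow> nat \<Rightarrow> 'l shg" where
  "hg_fresh G m = G\<lparr>hV := hV G \<union> {fresh_bound G..<fresh_bound G + m},
                    hsrc := hsrc G @ [fresh_bound G..<fresh_bound G + m]\<rparr>"

lemma hg_fresh_simps [simp]:
  "hV (hg_fresh G m) = hV G \<union> {fresh_bound G..<fresh_bound G + m}"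
  "hsrc (hg_fresh G m) = hsrc G @ [fresh_bound G..<fresh_bound G + m]"
  "hE (hg_fresh G m) = hE G" "hlab (hg_fresh G m) = hlab G" "hinc (hg_fresh G m) = hinc G"
  "hg_ar (hg_fresh G m) = hg_ar G + m"
  by (simp_all add: hg_fresh_def hg_ar_def)

lemma hg_fresh_0 [simp]: "hg_fresh G 0 = G"
  by (simp add: hg_fresh_def)

lemma hg_fresh_Suc:
  "hg_fresh G (Suc m) = (hg_fresh G m)\<lparr>hV := hV (hg_fresh G m) \<union> {fresh_bound G + m},
                                       hsrc := hsrc (hg_fresh G m) @ [fresh_bound G + m]\<rparr>"
  by (simp add: hg_fresh_def atLeastLessThanSuc)

lemma wf_fresh: "wf_hg C ar G \<Longrightarrow> wf_hg C ar (hg_fresh G m)"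
  unfolding wf_hg_def using less_fresh_bound[of G]
  by (auto simp: hg_fresh_def) (meson leD subsetD)+

definition del_edge :: "'l shg \<Rightarrow> nat \<Rightarrow> 'l shg" where
  "del_edge K e = K\<lparr>hE := hE K - {e}\<rparr>"

lemma del_edge_simps [simp]:
  "hV (del_edge K e) = hV K" "hE (del_edge K e) = hE K - {e}"
  "hlab (del_edge K e) = hlab K" "hinc (del_edge K e) = hinc K" "hsrc (del_edge K e) = hsrc K"
  by (simp_all add: del_edge_def)

lemma wf_del_edge: "wf_hg C ar K \<Longrightarrow> wf_hg C ar (del_edge K e)"
  unfolding wf_hg_def by auto

definition unpar_map :: "(nat \<Rightarrow> nat) \<Rightarrow> nat \<Rightarrow> nat" where
  "unpar_map g y = (case sum_decode y of Inl a \<Rightarrow> a | Inr w \<Rightarrow> g w)"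

lemma unpar_map_simps [simp]:
  "unpar_map g (vL a) = a" "unpar_map g (sum_encode (Inr w)) = g w"
  by (simp_all add: unpar_map_def)

lemma fl_vmap_eq_unpar_par_vmap:
  assumes wf: "wf_hg (HH C ar) hg_ar K" and e: "e \<in> hE K" and s: "hsrc K = hinc K e @ rest"
    and v: "v \<in> hV (hlab K e)"
  shows "fl_vmap K e v
           = unpar_map (vR e) (par_vmap (flatten (del_edge K e)) (hg_fresh (hlab K e) (length rest)) v)"
proof -
  define Lab where "Lab = hlab K e"
  define Y where "Y = hg_fresh Lab (length rest)"
  have wl: "wf_hg C ar Lab" using wf_hgD(5)[OF wf e] by (simp add: Lab_def)
  have below: "w < fresh_bound Lab" if "w \<in> hV Lab" for w
    using less_fresh_bound[OF wf_hgD(1)[OF wl] that] .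
  show ?thesis
  proof (cases "v \<in> set (hsrc Lab)")
    case True
    have j: "src_index (hsrc Lab) v < length (hinc K e)"
      using src_index[OF wf_hgD(3)[OF wl] True] wf_hgD(8)[OF wf e] by (simp add: Lab_def hg_ar_def)
    have "distinct (hsrc Y)"
      using wf_hgD(3,4)[OF wl] below by (auto simp: Y_def) (meson leD subsetD)
    then have "src_index (hsrc Y) v = src_index (hsrc Lab) v"
      using src_index_append[of "hsrc Lab" _ v] True by (simp add: Y_def)
    then show ?thesis
      using True j s by (simp add: par_vmap_def fl_vmap_src nth_append Y_def Lab_def[symmetric])
  next
    case False
    have "v \<notin> set (hsrc Y)" using False below[OF v[folded Lab_def]] by (auto simp: Y_def)
    then show ?thesis
      using False by (auto simp: par_vmap_def fl_vmap_nonsrc Y_def Lab_def[symmetric])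
  qed
qed

text \<open>Parallel composition fuses sources by position, so the sources of \<open>K\<close> must start with
  the incidence of \<open>e\<close>; the remaining sources are matched by padding the label of \<open>e\<close> with
  fresh isolated sources.\<close>

lemma flatten_del_edge_par_iso:
  assumes wf: "wf_hg (HH C ar) hg_ar K" and e: "e \<in> hE K" and s: "hsrc K = hinc K e @ rest"
  shows "hg_iso (hg_par (flatten (del_edge K e)) (hg_fresh (hlab K e) (length rest))) (flatten K)"
proof -
  define Lab where "Lab = hlab K e"
  define P where "P = flatten (del_edge K e)"
  define Y where "Y = hg_fresh Lab (length rest)"
  have wl: "wf_hg C ar Lab" using wf_hgD(5)[OF wf e] by (simp add: Lab_def)
  have inner: "hV Y - set (hsrc Y) = hV Lab - set (hsrc Lab)"
    using less_fresh_bound[OF wf_hgD(1)[OF wl]] by (auto simp: Y_def) (meson leD)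
  define \<iota> :: "nat \<Rightarrow> nat" where "\<iota> x = (case sum_decode x of Inl v \<Rightarrow> vL x
       | Inr p \<Rightarrow> (case prod_decode p of (e', w) \<Rightarrow> if e' = e then sum_encode (Inr w) else vL x))" for x
  define \<kappa> :: "nat \<Rightarrow> nat" where "\<kappa> x = (case prod_decode x of (e', f) \<Rightarrow>
       if e' = e then sum_encode (Inr f) else vL x)" for x
  have \<iota> [simp]: "\<iota> (vL v) = vL (vL v)"
    "\<iota> (vR e' w) = (if e' = e then sum_encode (Inr w) else vL (vR e' w))" for v e' w
    by (simp_all add: \<iota>_def)
  have \<kappa> [simp]: "\<kappa> (prod_encode (e', f)) = (if e' = e then sum_encode (Inr f) else vL (prod_encode (e', f)))"
    for e' f by (simp add: \<kappa>_def)
  show ?thesis unfolding Y_def[symmetric] P_def[symmetric] Lab_def[symmetric]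
  proof (rule hg_isoI[of "unpar_map (vR e)" _ _ "unpar_map (\<lambda>f. prod_encode (e, f))"])
    show "bij_betw (unpar_map (vR e)) (hV (hg_par P Y)) (hV (flatten K))"
      by (rule bij_betw_byWitness[where f' = \<iota>]) (use inner e in \<open>auto simp: P_def Lab_def\<close>)
    show "bij_betw (unpar_map (\<lambda>f. prod_encode (e, f))) (hE (hg_par P Y)) (hE (flatten K))"
      by (rule bij_betw_byWitness[where f' = \<kappa>]) (use e in \<open>auto simp: P_def Y_def Lab_def\<close>)
    fix y assume "y \<in> hE (hg_par P Y)"
    then consider (rest) x where "y = vL x" "x \<in> hE P" | (edge) f where "y = sum_encode (Inr f)" "f \<in> hE Lab"
      by (auto simp: Y_def)
    then show "hlab (flatten K) (unpar_map (\<lambda>f. prod_encode (e, f)) y) = hlab (hg_par P Y) y \<and>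
        hinc (flatten K) (unpar_map (\<lambda>f. prod_encode (e, f)) y) = map (unpar_map (vR e)) (hinc (hg_par P Y) y)"
    proof cases
      case rest
      moreover obtain e' f where "x = prod_encode (e', f)" using rest(2) by (auto simp: P_def)
      moreover have "fl_vmap (del_edge K e) = fl_vmap K" by (rule fl_vmap_cong) simp_all
      ultimately show ?thesis by (simp add: P_def)
    next
      case edge
      then show ?thesis
        using fl_vmap_eq_unpar_par_vmap[OF wf e s] wf_hgD(7)[OF wl edge(2)]
        by (auto simp: Y_def P_def Lab_def subset_iff)
    qed
  qed (simp add: P_def)
qed

lemma hg_iso_par_discrete:
  assumes wX: "wf_hg C ar X" and dE: "hE D = {}" and dV: "set (hsrc D) = hV D"
    and dd: "distinct (hsrc D)" and len: "hg_ar D = hg_ar X"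
  shows "hg_iso X (hg_par D X)"
proof (rule hg_isoI[of "par_vmap D X" _ _ "\<lambda>e. sum_encode (Inr e)"])
  let ?sD = "hsrc D" and ?sX = "hsrc X"
  have dX: "distinct ?sX" using wf_hgD(3)[OF wX] .
  have lenX: "length ?sD = length ?sX" using len by (simp add: hg_ar_def)
  define \<iota> :: "nat \<Rightarrow> nat" where
    "\<iota> y = (case sum_decode y of Inl a \<Rightarrow> ?sX ! src_index ?sD a | Inr v \<Rightarrow> v)" for y
  have \<iota> [simp]: "\<iota> (vL a) = ?sX ! src_index ?sD a" "\<iota> (sum_encode (Inr v)) = v" for a v
    by (simp_all add: \<iota>_def)
  have pv: "par_vmap D X v = (if v \<in> set ?sX then vL (?sD ! src_index ?sX v) else sum_encode (Inr v))" for v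
    by (simp add: par_vmap_def)
  have D_src: "src_index ?sD a < length ?sX \<and> ?sD ! src_index ?sD a = a" if "a \<in> set ?sD" for a
    using src_index[OF dd that] lenX by simp
  have X_src: "src_index ?sX v < length ?sD \<and> ?sX ! src_index ?sX v = v" if "v \<in> set ?sX" for v
    using src_index[OF dX that] lenX by simp
  show "bij_betw (par_vmap D X) (hV X) (hV (hg_par D X))"
  proof (rule bij_betw_byWitness[where f' = \<iota>])
    show "\<forall>v\<in>hV X. \<iota> (par_vmap D X v) = v"
      using X_src dd by (simp add: pv src_index_nth)
    show "\<forall>y\<in>hV (hg_par D X). par_vmap D X (\<iota> y) = y"
      using D_src dX dV[symmetric] by (auto simp: pv src_index_nth)
    show "par_vmap D X ` hV X \<subseteq> hV (hg_par D X)"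
      using X_src dV[symmetric] by (auto simp: pv)
    show "\<iota> ` hV (hg_par D X) \<subseteq> hV X"
      using D_src dV[symmetric] wf_hgD(4)[OF wX] by auto
  qed
  show "bij_betw (\<lambda>e. sum_encode (Inr e)) (hE X) (hE (hg_par D X))"
    using dE by (simp add: bij_betw_def inj_on_def)
  show "hsrc (hg_par D X) = map (par_vmap D X) ?sX"
    by (rule nth_equalityI) (use lenX dX in \<open>simp_all add: pv src_index_nth\<close>)
qed simp

lemma hg_iso_par_left:
  assumes iso: "hg_iso G G'" and wH: "wf_hg C ar H" and len: "hg_ar G = hg_ar H"
  shows "hg_iso (hg_par G H) (hg_par G' H)"
proof -
  obtain \<phi> \<psi> \<phi>' \<psi>' where
        l: "\<forall>e\<in>hE G. hlab G' (\<psi> e) = hlab G e \<and> hinc G' (\<psi> e) = map \<phi> (hinc G e)"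
    and s: "hsrc G' = map \<phi> (hsrc G)"
    and i: "\<forall>v\<in>hV G. \<phi> v \<in> hV G' \<and> \<phi>' (\<phi> v) = v" "\<forall>v\<in>hV G'. \<phi>' v \<in> hV G \<and> \<phi> (\<phi>' v) = v"
      "\<forall>e\<in>hE G. \<psi> e \<in> hE G' \<and> \<psi>' (\<psi> e) = e" "\<forall>e\<in>hE G'. \<psi>' e \<in> hE G \<and> \<psi> (\<psi>' e) = e"
    using iso by (rule hg_isoE)
  define F :: "(nat \<Rightarrow> nat) \<Rightarrow> nat \<Rightarrow> nat" where
    "F f y = (case sum_decode y of Inl a \<Rightarrow> vL (f a) | Inr v \<Rightarrow> sum_encode (Inr v))" for f y
  have F [simp]: "F f (vL a) = vL (f a)" "F f (sum_encode (Inr v)) = sum_encode (Inr v)" for f a v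
    by (simp_all add: F_def)
  have pv: "par_vmap G' H v = F \<phi> (par_vmap G H v)" if "v \<in> hV H" for v
  proof (cases "v \<in> set (hsrc H)")
    case True
    have "src_index (hsrc H) v < length (hsrc G)"
      using src_index[OF wf_hgD(3)[OF wH] True] len by (simp add: hg_ar_def)
    then show ?thesis using True s by (simp add: par_vmap_def)
  qed (simp add: par_vmap_def)
  show ?thesis
  proof (rule hg_isoI[of "F \<phi>" _ _ "F \<psi>"])
    show "bij_betw (F \<phi>) (hV (hg_par G H)) (hV (hg_par G' H))"
      by (rule bij_betw_byWitness[where f' = "F \<phi>'"]) (use i(1,2) in auto)
    show "bij_betw (F \<psi>) (hE (hg_par G H)) (hE (hg_par G' H))"
      by (rule bij_betw_byWitness[where f' = "F \<psi>'"]) (use i(3,4) in auto)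
    fix y assume "y \<in> hE (hg_par G H)"
    then show "hlab (hg_par G' H) (F \<psi> y) = hlab (hg_par G H) y \<and>
        hinc (hg_par G' H) (F \<psi> y) = map (F \<phi>) (hinc (hg_par G H) y)"
      using l pv wf_hgD(7)[OF wH] by (auto simp: subset_iff)
  qed (use s in simp)
qed

lemma flatten_single_edge_iso:
  assumes wf: "wf_hg (HH C ar) hg_ar K" and E: "hE K = {e}" and s: "hsrc K = hinc K e @ rest"
    and V: "hV K = set (hsrc K)"
  shows "hg_iso (hg_fresh (hlab K e) (length rest)) (flatten K)"
proof -
  have e: "e \<in> hE K" using E by simp
  have "hg_iso (hg_fresh (hlab K e) (length rest))
          (hg_par (flatten (del_edge K e)) (hg_fresh (hlab K e) (length rest)))"
  proof (rule hg_iso_par_discrete[OF wf_fresh])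
    show "wf_hg C ar (hlab K e)" using wf_hgD(5)[OF wf e] by simp
    show "distinct (hsrc (flatten (del_edge K e)))" using wf_hgD(3)[OF wf] by (simp add: distinct_map)
    show "hg_ar (flatten (del_edge K e)) = hg_ar (hg_fresh (hlab K e) (length rest))"
      using s wf_hgD(8)[OF wf e] by (simp add: hg_ar_def)
  qed (use E V in simp_all)
  then show ?thesis using flatten_del_edge_par_iso[OF wf e s] hg_iso_trans by blast
qed

lemma hg_iso_addv:
  assumes "w \<notin> hV H"
  shows "hg_iso (hg_addv H) (H\<lparr>hV := hV H \<union> {w}, hsrc := hsrc H @ [w]\<rparr>)"
proof (rule hg_isoI[of "unpar_map (\<lambda>_. w)" _ _ id])
  show "bij_betw (unpar_map (\<lambda>_. w)) (hV (hg_addv H)) (hV (H\<lparr>hV := hV H \<union> {w}, hsrc := hsrc H @ [w]\<rparr>))"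
    by (rule bij_betw_byWitness[where f' = "\<lambda>v. if v = w then sum_encode (Inr 0) else vL v"])
      (use assms in \<open>auto simp: hg_addv_def\<close>)
qed (simp_all add: hg_addv_def comp_def)

lemma hg_iso_addv_fresh:
  assumes "finite (hV G)"
  shows "hg_iso (hg_addv (hg_fresh G m)) (hg_fresh G (Suc m))"
  unfolding hg_fresh_Suc
  by (rule hg_iso_addv) (use less_fresh_bound[OF assms] in auto)

lemma hg_iso_restrict:
  assumes iso: "hg_iso G G'" and fs: "set fs \<subseteq> {..<hg_ar G}"
  shows "hg_iso (hg_restrict fs G) (hg_restrict fs G')"
proof -
  obtain \<phi> \<psi> where "bij_betw \<phi> (hV G) (hV G')" "bij_betw \<psi> (hE G) (hE G')"
    "\<forall>e\<in>hE G. hlab G' (\<psi> e) = hlab G e \<and> hinc G' (\<psi> e) = map \<phi> (hinc G e)"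
    and s: "hsrc G' = map \<phi> (hsrc G)"
    using iso unfolding hg_iso_def by blast
  moreover have "map (\<lambda>i. hsrc G' ! i) fs = map \<phi> (map (\<lambda>i. hsrc G ! i) fs)"
    using s fs by (auto simp: subset_iff hg_ar_def)
  ultimately show ?thesis by (intro hg_isoI[of \<phi> _ _ \<psi>]) (simp_all add: hg_restrict_def)
qed

section \<open>HR-compatible equivalences are congruences\<close>

lemma ranked_equivD:
  assumes "ranked_equiv S ar R"
  shows ranked_equiv_wf: "\<And>G G'. (G, G') \<in> R \<Longrightarrow> wf_hg S ar G \<and> wf_hg S ar G'"
    and ranked_equiv_refl: "\<And>G. wf_hg S ar G \<Longrightarrow> (G, G) \<in> R"
    and ranked_equiv_sym: "\<And>G G'. (G, G') \<in> R \<Longrightarrow> (G', G) \<in> R"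
    and ranked_equiv_trans: "\<And>G1 G2 G3. (G1, G2) \<in> R \<Longrightarrow> (G2, G3) \<in> R \<Longrightarrow> (G1, G3) \<in> R"
    and ranked_equiv_iso: "\<And>G G'. wf_hg S ar G \<Longrightarrow> hg_iso G G' \<Longrightarrow> (G, G') \<in> R"
    and ranked_equiv_ar: "\<And>G G'. (G, G') \<in> R \<Longrightarrow> hg_ar G = hg_ar G'"
proof -
  have e: "equiv (HH S ar) R" and i: "\<forall>G\<in>HH S ar. \<forall>G'. hg_iso G G' \<longrightarrow> (G, G') \<in> R"
    and a: "\<forall>G G'. (G, G') \<in> R \<longrightarrow> hg_ar G = hg_ar G'"
    using assms unfolding ranked_equiv_def by auto
  show "\<And>G G'. (G, G') \<in> R \<Longrightarrow> wf_hg S ar G \<and> wf_hg S ar G'"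
    using e unfolding equiv_def refl_on_def by auto
  show "\<And>G. wf_hg S ar G \<Longrightarrow> (G, G) \<in> R"
    using e unfolding equiv_def refl_on_def by auto
  show "\<And>G G'. (G, G') \<in> R \<Longrightarrow> (G', G) \<in> R"
    using e unfolding equiv_def sym_def by blast
  show "\<And>G1 G2 G3. (G1, G2) \<in> R \<Longrightarrow> (G2, G3) \<in> R \<Longrightarrow> (G1, G3) \<in> R"
    using e unfolding equiv_def trans_def by blast
  show "\<And>G G'. wf_hg S ar G \<Longrightarrow> hg_iso G G' \<Longrightarrow> (G, G') \<in> R"
    using i by simp
  show "\<And>G G'. (G, G') \<in> R \<Longrightarrow> hg_ar G = hg_ar G'"
    using a by blast
qed

lemma ranked_equiv_iso_transfer:
  assumes RE: "ranked_equiv S ar R" and rel: "(G, G') \<in> R"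
    and iso: "hg_iso G H" "hg_iso G' H'"
  shows "(H, H') \<in> R"
proof -
  have "(G, H) \<in> R" "(G', H') \<in> R"
    using ranked_equiv_iso[OF RE] ranked_equiv_wf[OF RE rel] iso by auto
  then show ?thesis
    using ranked_equiv_trans[OF RE ranked_equiv_sym[OF RE] ranked_equiv_trans[OF RE rel]] by simp
qed

lemma HR_compatibleD:
  assumes "HR_compatible S ar R"
  shows HR_compatible_par: "\<And>G G' H H'. (G, G') \<in> R \<Longrightarrow> (H, H') \<in> R \<Longrightarrow> hg_ar G = hg_ar H \<Longrightarrow>
      (hg_par G H, hg_par G' H') \<in> R"
    and HR_compatible_addv: "\<And>G G'. (G, G') \<in> R \<Longrightarrow> (hg_addv G, hg_addv G') \<in> R"
    and HR_compatible_restrict: "\<And>G G' fs. (G, G') \<in> R \<Longrightarrow> distinct fs \<Longrightarrow>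
      set fs \<subseteq> {..<hg_ar G} \<Longrightarrow> (hg_restrict fs G, hg_restrict fs G') \<in> R"
  using assms unfolding HR_compatible_def by blast+

lemma HR_compatible_fresh:
  assumes RE: "ranked_equiv S ar R" and HR: "HR_compatible S ar R" and rel: "(G, G') \<in> R"
  shows "(hg_fresh G m, hg_fresh G' m) \<in> R"
proof (induction m)
  case 0
  then show ?case using rel by simp
next
  case (Suc m)
  have "finite (hV G)" "finite (hV G')" using ranked_equiv_wf[OF RE rel] by (auto dest: wf_hgD(1))
  then show ?case
    by (rule ranked_equiv_iso_transfer[OF RE HR_compatible_addv[OF HR Suc] hg_iso_addv_fresh hg_iso_addv_fresh])
qed

lemma relabel_update_hsrc: "relabel f (K\<lparr>hsrc := s\<rparr>) = (relabel f K)\<lparr>hsrc := s\<rparr>"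
  by (simp add: relabel_def)

lemma del_edge_relabel: "del_edge (relabel f K) e = relabel f (del_edge K e)"
  by (simp add: relabel_def del_edge_def)

lemma wf_relabel_ranked_equiv:
  assumes RE: "ranked_equiv S ar R" and wf: "wf_hg (HH S ar) hg_ar (relabel f K)"
    and rel: "\<forall>e\<in>hE K. (f (hlab K e), g (hlab K e)) \<in> R"
  shows "wf_hg (HH S ar) hg_ar (relabel g K)"
proof -
  have "g (hlab K e) \<in> HH S ar \<and> hg_ar (g (hlab K e)) = hg_ar (f (hlab K e))" if "e \<in> hE K" for e
  proof -
    have r: "(f (hlab K e), g (hlab K e)) \<in> R" using rel that by blast
    then show ?thesis using ranked_equiv_wf[OF RE r] ranked_equiv_ar[OF RE r] by simp
  qed
  then show ?thesis using wf unfolding wf_hg_def by simp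
qed

lemma HR_compatible_flatten_restrict_sources:
  assumes RE: "ranked_equiv S ar R" and HR: "HR_compatible S ar R"
    and rel: "(flatten (relabel f (K\<lparr>hsrc := s\<rparr>)), flatten (relabel g (K\<lparr>hsrc := s\<rparr>))) \<in> R"
    and s: "distinct s" "set (hsrc K) \<subseteq> set s" and dK: "distinct (hsrc K)"
  shows "(flatten (relabel f K), flatten (relabel g K)) \<in> R"
proof -
  define q where "q = map (src_index s) (hsrc K)"
  have qs: "set q \<subseteq> {..<length s}" using src_index[OF s(1)] s(2) by (auto simp: q_def)
  have "inj_on (src_index s) (set (hsrc K))"
    by (rule inj_onI) (metis s src_index subsetD)
  then have qd: "distinct q" using dK by (simp add: q_def distinct_map)
  have qm: "map (\<lambda>i. s ! i) q = hsrc K" using src_index[OF s(1)] s(2) by (auto simp: q_def subset_iff intro!: map_idI)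
  have restored: "hg_restrict q (flatten (relabel h (K\<lparr>hsrc := s\<rparr>))) = flatten (relabel h K)" for h
  proof -
    have "(relabel h K)\<lparr>hsrc := hsrc K\<rparr> = relabel h K" by (simp add: relabel_def)
    then show ?thesis
      using restrict_flatten[OF qs, of "relabel h K"] qm by (simp add: relabel_update_hsrc[symmetric])
  qed
  show ?thesis
    using HR_compatible_restrict[OF HR rel qd] qs by (simp add: restored hg_ar_def)
qed

lemma HR_compatible_flatten_del_edge:
  assumes RE: "ranked_equiv S ar R" and HR: "HR_compatible S ar R"
    and wf: "wf_hg (HH S ar) hg_ar (relabel f K)"
    and e: "e \<in> hE K" and s: "hsrc K = hinc K e @ rest"
    and rel: "\<forall>e\<in>hE K. (f (hlab K e), g (hlab K e)) \<in> R"
    and rel_rest: "(flatten (relabel f (del_edge K e)), flatten (relabel g (del_edge K e))) \<in> R"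
  shows "(flatten (relabel f K), flatten (relabel g K)) \<in> R"
proof -
  have wf': "wf_hg (HH S ar) hg_ar (relabel g K)" by (rule wf_relabel_ranked_equiv[OF RE wf rel])
  have rel_e: "(f (hlab K e), g (hlab K e)) \<in> R" using rel e by blast
  have "hg_ar (f (hlab K e)) = length (hinc K e)"
    using wf_hgD(8)[OF wf] e by simp
  then have "hg_ar (flatten (relabel f (del_edge K e))) = hg_ar (hg_fresh (f (hlab K e)) (length rest))"
    using s by (simp add: hg_ar_def)
  then have "(hg_par (flatten (relabel f (del_edge K e))) (hg_fresh (f (hlab K e)) (length rest)),
              hg_par (flatten (relabel g (del_edge K e))) (hg_fresh (g (hlab K e)) (length rest))) \<in> R"
    using HR_compatible_par[OF HR rel_rest HR_compatible_fresh[OF RE HR rel_e]] by blast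
  moreover have "hg_iso (hg_par (flatten (relabel h (del_edge K e))) (hg_fresh (h (hlab K e)) (length rest)))
                   (flatten (relabel h K))"
    if "wf_hg (HH S ar) hg_ar (relabel h K)" for h
    using flatten_del_edge_par_iso[OF that, of e rest] e s by (simp add: del_edge_relabel)
  ultimately show ?thesis
    using ranked_equiv_iso_transfer[OF RE] wf wf' by blast
qed

lemma HR_compatible_flatten_all_sources:
  assumes RE: "ranked_equiv S ar R" and HR: "HR_compatible S ar R"
    and "wf_hg (HH S ar) hg_ar (relabel f K)" and "set (hsrc K) = hV K"
    and "\<forall>e\<in>hE K. (f (hlab K e), g (hlab K e)) \<in> R"
  shows "(flatten (relabel f K), flatten (relabel g K)) \<in> R"
  using assms(3-)
proof (induction "card (hE K)" arbitrary: K)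
  case 0
  then have "hE K = {}" using wf_hgD(2) by fastforce
  then have "hg_iso (flatten (relabel f K)) (flatten (relabel g K))"
    by (intro hg_iso_agree_on_edges) simp_all
  then show ?case by (rule ranked_equiv_iso[OF RE wf_flatten[OF "0.prems"(1)]])
next
  case (Suc n K)
  obtain e where e: "e \<in> hE K" using Suc.hyps(2) by fastforce
  define rest where "rest = filter (\<lambda>v. v \<notin> set (hinc K e)) (hsrc K)"
  define K1 where "K1 = K\<lparr>hsrc := hinc K e @ rest\<rparr>"
  have wf: "wf_hg (HH S ar) hg_ar (relabel f K)" by (rule Suc.prems(1))
  have ds: "distinct (hinc K e @ rest)"
    using wf_hgD(3)[OF wf] wf_hgD(6)[OF wf, of e] e by (auto simp: rest_def)
  have ss: "set (hinc K e @ rest) = hV K"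
    using wf_hgD(7)[OF wf, of e] e Suc.prems(2) by (auto simp: rest_def)
  have wK1: "wf_hg (HH S ar) hg_ar (relabel f K1)"
    using wf ds ss unfolding wf_hg_def K1_def by (simp add: relabel_update_hsrc)
  have "(flatten (relabel f K1), flatten (relabel g K1)) \<in> R"
  proof (rule HR_compatible_flatten_del_edge[OF RE HR wK1])
    show "(flatten (relabel f (del_edge K1 e)), flatten (relabel g (del_edge K1 e))) \<in> R"
      using Suc.hyps(1)[of "del_edge K1 e"] Suc.hyps(2) Suc.prems(3) e wf_hgD(2)[OF wf]
        wf_del_edge[OF wK1] ss by (simp add: K1_def del_edge_relabel)
  qed (use e Suc.prems(3) in \<open>simp_all add: K1_def\<close>)
  then show ?case unfolding K1_def
    by (rule HR_compatible_flatten_restrict_sources[OF RE HR]) (use ds ss wf_hgD(3,4)[OF wf] in auto)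
qed

lemma HR_compatible_flatten:
  assumes RE: "ranked_equiv S ar R" and HR: "HR_compatible S ar R"
    and wf: "wf_hg (HH S ar) hg_ar (relabel f K)"
    and rel: "\<forall>e\<in>hE K. (f (hlab K e), g (hlab K e)) \<in> R"
  shows "(flatten (relabel f K), flatten (relabel g K)) \<in> R"
proof (rule HR_compatible_flatten_restrict_sources[OF RE HR])
  define s where "s = hsrc K @ sorted_list_of_set (hV K - set (hsrc K))"
  have ds: "distinct s" and ss: "set s = hV K"
    using wf_hgD(1,3,4)[OF wf] by (auto simp: s_def)
  then have "wf_hg (HH S ar) hg_ar (relabel f (K\<lparr>hsrc := s\<rparr>))"
    using wf unfolding wf_hg_def by (simp add: relabel_update_hsrc)
  then show "(flatten (relabel f (K\<lparr>hsrc := s\<rparr>)), flatten (relabel g (K\<lparr>hsrc := s\<rparr>))) \<in> R"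
    by (rule HR_compatible_flatten_all_sources[OF RE HR]) (use ss rel in simp_all)
  show "distinct s" "set (hsrc K) \<subseteq> set s" "distinct (hsrc K)"
    using ds wf_hgD(3)[OF wf] by (simp_all add: s_def)
qed

lemma wf_poly:
  assumes "wf_hg (HH S ar <+> UNIV) (case_sum hg_ar arX) t" and "valuation S ar arX \<eta>"
  shows "wf_hg (HH S ar) hg_ar (relabel (case_sum id \<eta>) t)"
  using assms unfolding wf_hg_def valuation_def by (auto split: sum.splits)

theorem HR_compatible_imp_congruence:
  assumes RE: "ranked_equiv S ar R" and HR: "HR_compatible S ar R"
  shows "congruence S ar R"
  unfolding congruence_def
proof (intro conjI allI impI)
  fix arX t \<eta> \<eta>'
  assume t: "wf_hg (HH S ar <+> UNIV) (case_sum hg_ar arX) t" and \<eta>: "valuation S ar arX \<eta>"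
    and rel: "\<forall>x. (\<eta> x, \<eta>' x) \<in> R"
  have "(case_sum id \<eta> l, case_sum id \<eta>' l) \<in> R" if "l \<in> HH S ar <+> UNIV" for l
    using that rel ranked_equiv_refl[OF RE] by auto
  then show "(poly_op t \<eta>, poly_op t \<eta>') \<in> R"
    unfolding poly_op_def using HR_compatible_flatten[OF RE HR wf_poly[OF t \<eta>]] wf_hgD(5)[OF t] by blast
qed (rule RE)

section \<open>Congruences are HR-compatible\<close>

definition par_term :: "nat \<Rightarrow> ('s shg + nat) shg" where
  "par_term n = \<lparr>hV = {..<n}, hE = {0, 1}, hlab = Inr, hinc = \<lambda>_. [0..<n], hsrc = [0..<n]\<rparr>"

definition addv_term :: "nat \<Rightarrow> ('s shg + nat) shg" where
  "addv_term n = \<lparr>hV = {..<Suc n}, hE = {0}, hlab = Inr, hinc = \<lambda>_. [0..<n], hsrc = [0..<Suc n]\<rparr>"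

definition restrict_term :: "nat \<Rightarrow> nat list \<Rightarrow> ('s shg + nat) shg" where
  "restrict_term n fs = \<lparr>hV = {..<n}, hE = {0}, hlab = Inr, hinc = \<lambda>_. [0..<n], hsrc = fs\<rparr>"

lemma wf_par_term: "wf_hg (HH S ar <+> UNIV) (case_sum hg_ar (\<lambda>_. n)) (par_term n)"
  by (auto simp: wf_hg_def par_term_def)

lemma wf_addv_term: "wf_hg (HH S ar <+> UNIV) (case_sum hg_ar (\<lambda>_. n)) (addv_term n)"
  by (auto simp: wf_hg_def addv_term_def)

lemma wf_restrict_term:
  "distinct fs \<Longrightarrow> set fs \<subseteq> {..<n} \<Longrightarrow> wf_hg (HH S ar <+> UNIV) (case_sum hg_ar (\<lambda>_. n)) (restrict_term n fs)"
  by (auto simp: wf_hg_def restrict_term_def)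

lemma congruence_poly_iso:
  assumes C: "congruence S ar R" and t: "wf_hg (HH S ar <+> UNIV) (case_sum hg_ar arX) t"
    and \<eta>: "valuation S ar arX \<eta>" "valuation S ar arX \<eta>'" and rel: "\<forall>x. (\<eta> x, \<eta>' x) \<in> R"
    and iso: "hg_iso (poly_op t \<eta>) H" "hg_iso (poly_op t \<eta>') H'"
  shows "(H, H') \<in> R"
proof -
  have RE: "ranked_equiv S ar R" using C unfolding congruence_def by blast
  have "(poly_op t \<eta>, poly_op t \<eta>') \<in> R" using C t \<eta> rel unfolding congruence_def by blast
  then show ?thesis using ranked_equiv_iso_transfer[OF RE _ iso] by blast
qed

lemma poly_par_term_iso:
  assumes wG: "wf_hg S ar G" and wH: "wf_hg S ar H" and n: "hg_ar G = n" "hg_ar H = n"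
  shows "hg_iso (poly_op (par_term n) (\<lambda>x. if x = 0 then G else H)) (hg_par G H)"
proof -
  define K where "K = relabel (case_sum id (\<lambda>x. if x = 0 then G else H)) (par_term n)"
  have wK: "wf_hg (HH S ar) hg_ar K" unfolding K_def
    by (rule wf_poly[OF wf_par_term]) (use wG wH n in \<open>auto simp: valuation_def\<close>)
  have wK1: "wf_hg (HH S ar) hg_ar (del_edge K 1)" by (rule wf_del_edge[OF wK])
  have "hg_iso (hg_fresh (hlab (del_edge K 1) 0) (length ([] :: nat list))) (flatten (del_edge K 1))"
    by (rule flatten_single_edge_iso[OF wK1]) (auto simp: K_def par_term_def)
  then have "hg_iso (hg_par G H) (hg_par (flatten (del_edge K 1)) H)"
    by (intro hg_iso_par_left[OF _ wH]) (use n in \<open>simp_all add: K_def par_term_def\<close>)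
  moreover have "hg_iso (hg_par (flatten (del_edge K 1)) (hg_fresh (hlab K 1) (length ([] :: nat list)))) (flatten K)"
    by (rule flatten_del_edge_par_iso[OF wK]) (auto simp: K_def par_term_def)
  ultimately have "hg_iso (hg_par G H) (flatten K)"
    by (simp add: K_def par_term_def hg_iso_trans)
  then show ?thesis
    using hg_iso_sym[OF wf_par[OF wG wH]] n by (simp add: K_def poly_op_def)
qed

lemma poly_addv_term_iso:
  assumes wG: "wf_hg S ar G" and n: "hg_ar G = n"
  shows "hg_iso (poly_op (addv_term n) (\<lambda>_. G)) (hg_addv G)"
proof -
  define K where "K = relabel (case_sum id (\<lambda>_. G)) (addv_term n)"
  have wK: "wf_hg (HH S ar) hg_ar K" unfolding K_def
    by (rule wf_poly[OF wf_addv_term]) (use wG n in \<open>auto simp: valuation_def\<close>)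
  have "hg_iso (hg_fresh (hlab K 0) (length [n])) (flatten K)"
    by (rule flatten_single_edge_iso[OF wK]) (auto simp: K_def addv_term_def)
  then have "hg_iso (hg_fresh G 1) (flatten K)" by (simp add: K_def addv_term_def)
  moreover have "hg_iso (hg_addv G) (hg_fresh G 1)"
    using hg_iso_addv_fresh[OF wf_hgD(1)[OF wG], of 0] by simp
  ultimately have "hg_iso (hg_addv G) (flatten K)" by (rule hg_iso_trans[rotated])
  then show ?thesis
    using hg_iso_sym[OF wf_addv[OF wG]] by (simp add: K_def poly_op_def)
qed

lemma poly_restrict_term_iso:
  assumes wG: "wf_hg S ar G" and n: "hg_ar G = n" and fs: "distinct fs" "set fs \<subseteq> {..<n}"
  shows "hg_iso (poly_op (restrict_term n fs) (\<lambda>_. G)) (hg_restrict fs G)"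
proof -
  define K where "K = relabel (case_sum id (\<lambda>_. G)) (restrict_term n fs)"
  define K0 where "K0 = K\<lparr>hsrc := [0..<n]\<rparr>"
  have wK: "wf_hg (HH S ar) hg_ar K" unfolding K_def
    by (rule wf_poly[OF wf_restrict_term[OF fs]]) (use wG n in \<open>auto simp: valuation_def\<close>)
  have wK0: "wf_hg (HH S ar) hg_ar K0"
    using wK n wG unfolding K0_def wf_hg_def by (auto simp: K_def restrict_term_def hg_ar_def)
  have "hg_iso (hg_fresh (hlab K0 0) (length ([] :: nat list))) (flatten K0)"
    by (rule flatten_single_edge_iso[OF wK0]) (auto simp: K0_def K_def restrict_term_def)
  then have "hg_iso (hg_restrict fs G) (hg_restrict fs (flatten K0))"
    by (intro hg_iso_restrict) (use fs n in \<open>simp_all add: K0_def K_def restrict_term_def\<close>)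
  also have "hg_restrict fs (flatten K0) = flatten (K\<lparr>hsrc := map (\<lambda>i. [0..<n] ! i) fs\<rparr>)"
    unfolding K0_def by (rule restrict_flatten) (use fs in simp)
  also have "K\<lparr>hsrc := map (\<lambda>i. [0..<n] ! i) fs\<rparr> = K"
    using fs by (auto simp: K_def restrict_term_def relabel_def intro!: map_idI)
  finally show ?thesis
    using hg_iso_sym[OF wf_restrict[OF wG fs(1)]] fs n by (simp add: K_def poly_op_def)
qed

theorem congruence_imp_HR_compatible:
  assumes C: "congruence S ar R"
  shows "HR_compatible S ar R"
proof -
  have RE: "ranked_equiv S ar R" using C unfolding congruence_def by blast
  note wf = ranked_equiv_wf[OF RE] and ar = ranked_equiv_ar[OF RE]
  have "(hg_par G H, hg_par G' H') \<in> R"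
    if rel: "(G, G') \<in> R" "(H, H') \<in> R" and n: "hg_ar G = hg_ar H" for G G' H H'
    by (rule congruence_poly_iso[OF C wf_par_term[of S ar "hg_ar G"],
          where \<eta> = "\<lambda>x. if x = 0 then G else H" and \<eta>' = "\<lambda>x. if x = 0 then G' else H'"])
      (use rel n wf ar in \<open>auto simp: valuation_def intro!: poly_par_term_iso\<close>)
  moreover have "(hg_addv G, hg_addv G') \<in> R" if rel: "(G, G') \<in> R" for G G'
    by (rule congruence_poly_iso[OF C wf_addv_term[of S ar "hg_ar G"],
          where \<eta> = "\<lambda>_. G" and \<eta>' = "\<lambda>_. G'"])
      (use rel wf ar in \<open>auto simp: valuation_def intro!: poly_addv_term_iso\<close>)
  moreover have "(hg_restrict fs G, hg_restrict fs G') \<in> R"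
    if rel: "(G, G') \<in> R" and fs: "distinct fs" "set fs \<subseteq> {..<hg_ar G}" for G G' fs
    by (rule congruence_poly_iso[OF C wf_restrict_term[OF fs], where \<eta> = "\<lambda>_. G" and \<eta>' = "\<lambda>_. G'"])
      (use rel fs wf ar in \<open>auto simp: valuation_def intro!: poly_restrict_term_iso\<close>)
  moreover have "(hg_empty, hg_empty) \<in> R"
    by (rule ranked_equiv_refl[OF RE]) (simp add: wf_hg_def hg_empty_def)
  moreover have "(hg_unit ar a, hg_unit ar a) \<in> R" if "a \<in> S" for a
    by (rule ranked_equiv_refl[OF RE]) (use that in \<open>auto simp: wf_hg_def hg_unit_def\<close>)
  ultimately show ?thesis unfolding HR_compatible_def by blast
qed

section \<open>The quotient algebra of a congruence\<close>

definition class_rep :: "'a set \<Rightarrow> 'a" where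
  "class_rep X = (SOME G. G \<in> X)"

definition quotient_ar :: "'s shg set \<Rightarrow> nat" where
  "quotient_ar X = hg_ar (class_rep X)"

definition quotient_prod :: "('s shg \<times> 's shg) set \<Rightarrow> 's shg set shg \<Rightarrow> 's shg set" where
  "quotient_prod R K = R `` {flatten (relabel class_rep K)}"

context
  fixes S :: "'s set" and ar :: "'s \<Rightarrow> nat" and R :: "('s shg \<times> 's shg) set"
  assumes RE: "ranked_equiv S ar R"
begin

lemma class_eq_iff: "wf_hg S ar G \<Longrightarrow> wf_hg S ar G' \<Longrightarrow> R `` {G} = R `` {G'} \<longleftrightarrow> (G, G') \<in> R"
  using RE equiv_class_eq_iff[of "HH S ar" R G G'] unfolding ranked_equiv_def by simp

lemma class_eqI: "(G, G') \<in> R \<Longrightarrow> R `` {G} = R `` {G'}"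
  using class_eq_iff ranked_equiv_wf[OF RE] by blast

lemma rel_class_rep: "wf_hg S ar G \<Longrightarrow> (G, class_rep (R `` {G})) \<in> R"
  using ranked_equiv_refl[OF RE, of G] unfolding class_rep_def by (auto intro: someI)

lemma class_rep_quotient:
  assumes "X \<in> HH S ar // R"
  shows "wf_hg S ar (class_rep X) \<and> R `` {class_rep X} = X"
proof -
  obtain G where G: "wf_hg S ar G" "X = R `` {G}" using assms by (auto elim: quotientE)
  then show ?thesis
    using rel_class_rep[OF G(1)] ranked_equiv_wf[OF RE] class_eqI[symmetric] by blast
qed

lemma quotient_ar_class: "wf_hg S ar G \<Longrightarrow> quotient_ar (R `` {G}) = hg_ar G"
  using ranked_equiv_ar[OF RE rel_class_rep] by (simp add: quotient_ar_def)

lemma class_in_quotient: "wf_hg S ar G \<Longrightarrow> R `` {G} \<in> HH S ar // R"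
  by (simp add: quotientI)

lemma wf_relabel_class_rep:
  assumes "wf_hg (HH S ar // R) quotient_ar K"
  shows "wf_hg (HH S ar) hg_ar (relabel class_rep K)"
  by (rule wf_relabel[OF assms]) (use class_rep_quotient wf_hgD(5)[OF assms] in \<open>simp add: quotient_ar_def\<close>)

lemma finite_per_arity_quotient:
  assumes "finite_index S ar R"
  shows "finite_per_arity (HH S ar // R) quotient_ar"
  unfolding finite_per_arity_def
proof
  fix n
  have "{X \<in> HH S ar // R. quotient_ar X = n} \<subseteq> {G \<in> HH S ar. hg_ar G = n} // R"
    using quotient_ar_class by (auto elim!: quotientE intro!: quotientI)
  then show "finite {X \<in> HH S ar // R. quotient_ar X = n}"
    using assms unfolding finite_index_def by (blast intro: finite_subset)
qed

lemma rel_recognises_class_preimage: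
  assumes rec: "rel_recognises L R" and L: "L \<subseteq> {G \<in> HH S ar. hg_ar G = 0}"
  shows "L = {G \<in> HH S ar. hg_ar G = 0 \<and> R `` {G} \<in> (\<lambda>G. R `` {G}) ` L}"
proof (intro equalityI subsetI)
  fix G assume "G \<in> {G \<in> HH S ar. hg_ar G = 0 \<and> R `` {G} \<in> (\<lambda>G. R `` {G}) ` L}"
  then obtain G0 where G: "wf_hg S ar G" "G0 \<in> L" "R `` {G0} = R `` {G}" by auto
  moreover have "wf_hg S ar G0" using G(2) L by auto
  ultimately have "(G0, G) \<in> R" using class_eq_iff G(3) by simp
  then show "G \<in> L" using rec G(2) unfolding rel_recognises_def by blast
qed (use L in auto)

context
  assumes HR: "HR_compatible S ar R"
begin

lemma quotient_prod_in:
  assumes "wf_hg (HH S ar // R) quotient_ar K"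
  shows "quotient_prod R K \<in> HH S ar // R \<and> quotient_ar (quotient_prod R K) = hg_ar K"
  using class_in_quotient quotient_ar_class wf_flatten[OF wf_relabel_class_rep[OF assms]]
  by (simp add: quotient_prod_def)

lemma quotient_prod_iso:
  assumes K: "wf_hg (HH S ar // R) quotient_ar K" and iso: "hg_iso K K'"
  shows "quotient_prod R K = quotient_prod R K'"
proof -
  have "hg_iso (flatten (relabel class_rep K)) (flatten (relabel class_rep K'))"
    by (rule hg_iso_flatten[OF wf_relabel_class_rep[OF K] hg_iso_relabel[OF iso]])
  then show ?thesis unfolding quotient_prod_def
    by (intro class_eqI ranked_equiv_iso[OF RE wf_flatten[OF wf_relabel_class_rep[OF K]]])
qed

lemma quotient_prod_unit:
  assumes X: "X \<in> HH S ar // R"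
  shows "quotient_prod R (hg_unit quotient_ar X) = X"
proof -
  define U where "U = relabel class_rep (hg_unit quotient_ar X)"
  have "wf_hg (HH S ar // R) quotient_ar (hg_unit quotient_ar X)"
    using X by (auto simp: wf_hg_def hg_unit_def)
  then have "wf_hg (HH S ar) hg_ar U" unfolding U_def by (rule wf_relabel_class_rep)
  then have "hg_iso (hg_fresh (hlab U 0) (length ([] :: nat list))) (flatten U)"
    by (rule flatten_single_edge_iso) (auto simp: U_def hg_unit_def)
  then have "(class_rep X, flatten U) \<in> R"
    using ranked_equiv_iso[OF RE] class_rep_quotient[OF X] by (simp add: U_def hg_unit_def)
  then show ?thesis
    using class_eqI class_rep_quotient[OF X] by (simp add: quotient_prod_def U_def)
qed

text \<open>Associativity of the quotient product reduces to associativity of flattening, because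
  representatives may be exchanged inside a flattening (HR-compatibility).\<close>

lemma quotient_prod_flatten:
  assumes K: "wf_hg (HH (HH S ar // R) quotient_ar) hg_ar K"
  shows "quotient_prod R (relabel (quotient_prod R) K) = quotient_prod R (flatten K)"
proof -
  let ?inner = "flatten \<circ> relabel class_rep" and ?outer = "class_rep \<circ> quotient_prod R"
  have wK2: "wf_hg (HH (HH S ar) hg_ar) hg_ar (relabel (relabel class_rep) K)"
    by (rule wf_relabel[OF K]) (use wf_relabel_class_rep wf_hgD(5)[OF K] in auto)
  have wf_inner: "wf_hg (HH S ar) hg_ar (relabel ?inner K)"
    by (rule wf_relabel[OF K]) (use wf_relabel_class_rep wf_hgD(5)[OF K] in \<open>auto intro!: wf_flatten\<close>)
  have "(?inner X, ?outer X) \<in> R" if "X \<in> HH (HH S ar // R) quotient_ar" for X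
    using rel_class_rep[OF wf_flatten[OF wf_relabel_class_rep]] that by (simp add: quotient_prod_def)
  then have "(flatten (relabel ?inner K), flatten (relabel ?outer K)) \<in> R"
    using HR_compatible_flatten[OF RE HR wf_inner] wf_hgD(5)[OF K] by blast
  moreover have "hg_iso (flatten (flatten (relabel (relabel class_rep) K))) (flatten (relabel ?inner K))"
    using flatten_flatten_iso[OF wK2] by (simp add: relabel_relabel)
  then have "(flatten (flatten (relabel (relabel class_rep) K)), flatten (relabel ?inner K)) \<in> R"
    by (rule ranked_equiv_iso[OF RE wf_flatten[OF wf_flatten[OF wK2]]])
  ultimately have "(flatten (relabel class_rep (flatten K)), flatten (relabel class_rep (relabel (quotient_prod R) K))) \<in> R"
    using ranked_equiv_trans[OF RE] by (simp add: relabel_flatten relabel_relabel)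
  then show ?thesis unfolding quotient_prod_def by (metis class_eqI)
qed

lemma quotient_H_algebra: "H_algebra (HH S ar // R) quotient_ar (quotient_prod R)"
  unfolding H_algebra_def
  using quotient_prod_in quotient_prod_iso quotient_prod_unit quotient_prod_flatten by blast

lemma class_H_hom: "H_hom S ar (HH S ar // R) quotient_ar (quotient_prod R) (\<lambda>G. R `` {G})"
  unfolding H_hom_def
proof (intro conjI ballI allI impI)
  fix G assume "G \<in> HH S ar"
  then show "R `` {G} \<in> HH S ar // R" "quotient_ar (R `` {G}) = hg_ar G"
    using class_in_quotient quotient_ar_class by simp_all
next
  fix G G' assume "G \<in> HH S ar" "hg_iso G G'"
  then show "R `` {G} = R `` {G'}" using class_eqI ranked_equiv_iso[OF RE] by simp
next
  fix K assume K: "wf_hg (HH S ar) hg_ar K"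
  have "(flatten (relabel id K), flatten (relabel (class_rep \<circ> (\<lambda>G. R `` {G})) K)) \<in> R"
    by (rule HR_compatible_flatten[OF RE HR])
      (use K rel_class_rep wf_hgD(5)[OF K] in \<open>simp_all add: relabel_id\<close>)
  then show "R `` {flatten K} = quotient_prod R (relabel (\<lambda>G. R `` {G}) K)"
    unfolding quotient_prod_def by (simp add: relabel_id relabel_relabel class_eqI)
qed

lemma recognised_by_quotient:
  assumes "rel_recognises L R" and "L \<subseteq> {G \<in> HH S ar. hg_ar G = 0}"
  shows "recognised_by_alg S ar L (HH S ar // R) quotient_ar (quotient_prod R)"
  unfolding recognised_by_alg_def
  by (intro exI) (rule conjI[OF class_H_hom rel_recognises_class_preimage[OF assms]])

end

end

section \<open>The kernel of a homomorphism\<close>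

definition hom_kernel :: "'s set \<Rightarrow> ('s \<Rightarrow> nat) \<Rightarrow> ('s shg \<Rightarrow> 'a) \<Rightarrow> ('s shg \<times> 's shg) set" where
  "hom_kernel S ar h = {(G, G'). wf_hg S ar G \<and> wf_hg S ar G' \<and> h G = h G'}"

lemma H_homD:
  assumes "H_hom S ar A arA \<pi> h"
  shows H_hom_in: "\<And>G. wf_hg S ar G \<Longrightarrow> h G \<in> A \<and> arA (h G) = hg_ar G"
    and H_hom_iso: "\<And>G G'. wf_hg S ar G \<Longrightarrow> hg_iso G G' \<Longrightarrow> h G = h G'"
    and H_hom_flatten: "\<And>K. wf_hg (HH S ar) hg_ar K \<Longrightarrow> h (flatten K) = \<pi> (relabel h K)"
  using assms unfolding H_hom_def by simp_all

lemma H_algebra_iso: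
  "H_algebra A arA \<pi> \<Longrightarrow> wf_hg A arA G \<Longrightarrow> hg_iso G G' \<Longrightarrow> \<pi> G = \<pi> G'"
  unfolding H_algebra_def by blast

lemma ranked_equiv_hom_kernel:
  assumes hom: "H_hom S ar A arA \<pi> h"
  shows "ranked_equiv S ar (hom_kernel S ar h)"
  unfolding ranked_equiv_def
proof (intro conjI allI impI ballI)
  show "equiv (HH S ar) (hom_kernel S ar h)"
    by (rule equivI) (auto simp: hom_kernel_def refl_on_def sym_def trans_def)
  fix G G' assume "G \<in> HH S ar" "hg_iso G G'"
  then show "(G, G') \<in> hom_kernel S ar h"
    using wf_hg_iso H_hom_iso[OF hom] by (auto simp: hom_kernel_def)
next
  fix G G' assume "(G, G') \<in> hom_kernel S ar h"
  then have "wf_hg S ar G" "wf_hg S ar G'" "h G = h G'" by (simp_all add: hom_kernel_def)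
  then show "hg_ar G = hg_ar G'" using H_hom_in[OF hom] by metis
qed

lemma congruence_hom_kernel:
  assumes alg: "H_algebra A arA \<pi>" and hom: "H_hom S ar A arA \<pi> h"
  shows "congruence S ar (hom_kernel S ar h)"
  unfolding congruence_def
proof (intro conjI allI impI)
  fix arX t \<eta> \<eta>'
  assume t: "wf_hg (HH S ar <+> UNIV) (case_sum hg_ar arX) t"
    and \<eta>: "valuation S ar arX \<eta>" "valuation S ar arX \<eta>'"
    and rel: "\<forall>x. (\<eta> x, \<eta>' x) \<in> hom_kernel S ar h"
  define K where "K = relabel (case_sum id \<eta>) t"
  define K' where "K' = relabel (case_sum id \<eta>') t"
  have wK: "wf_hg (HH S ar) hg_ar K" "wf_hg (HH S ar) hg_ar K'"
    using wf_poly[OF t] \<eta> by (simp_all add: K_def K'_def)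
  have "wf_hg A arA (relabel h K)"
    by (rule wf_relabel[OF wK(1)]) (use H_hom_in[OF hom] wf_hgD(5)[OF wK(1)] in auto)
  moreover have "hg_iso (relabel h K) (relabel h K')"
  proof (rule hg_iso_agree_on_edges)
    fix e assume "e \<in> hE (relabel h K)"
    show "hlab (relabel h K') e = hlab (relabel h K) e \<and> hinc (relabel h K') e = hinc (relabel h K) e"
      using rel by (cases "hlab t e") (simp_all add: K_def K'_def hom_kernel_def)
  qed (simp_all add: K_def K'_def)
  ultimately have "\<pi> (relabel h K) = \<pi> (relabel h K')" by (rule H_algebra_iso[OF alg])
  then have "h (flatten K) = h (flatten K')" using H_hom_flatten[OF hom] wK by simp
  then show "(poly_op t \<eta>, poly_op t \<eta>') \<in> hom_kernel S ar h"
    using wf_flatten[OF wK(1)] wf_flatten[OF wK(2)] by (simp add: hom_kernel_def poly_op_def K_def K'_def)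
qed (rule ranked_equiv_hom_kernel[OF hom])

lemma finite_index_hom_kernel:
  assumes fin: "finite_per_arity A arA" and hom: "H_hom S ar A arA \<pi> h"
  shows "finite_index S ar (hom_kernel S ar h)"
  unfolding finite_index_def
proof
  fix n
  let ?fibre = "\<lambda>a. {G. wf_hg S ar G \<and> h G = a}"
  have "{G \<in> HH S ar. hg_ar G = n} // hom_kernel S ar h \<subseteq> ?fibre ` {a \<in> A. arA a = n}"
  proof
    fix X assume "X \<in> {G \<in> HH S ar. hg_ar G = n} // hom_kernel S ar h"
    then obtain G where G: "wf_hg S ar G" "hg_ar G = n" "X = hom_kernel S ar h `` {G}"
      by (auto elim: quotientE)
    then have "X = ?fibre (h G)" by (auto simp: hom_kernel_def)
    then show "X \<in> ?fibre ` {a \<in> A. arA a = n}" using H_hom_in[OF hom G(1)] G(2) by auto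
  qed
  moreover have "finite {a \<in> A. arA a = n}" using fin unfolding finite_per_arity_def by blast
  ultimately show "finite ({G \<in> HH S ar. hg_ar G = n} // hom_kernel S ar h)"
    by (rule finite_subset[OF _ finite_imageI])
qed

lemma rel_recognises_hom_kernel:
  assumes hom: "H_hom S ar A arA \<pi> h"
  shows "rel_recognises {G \<in> HH S ar. hg_ar G = 0 \<and> h G \<in> F} (hom_kernel S ar h)"
  unfolding rel_recognises_def
proof (intro allI impI)
  fix G G' assume rel: "(G, G') \<in> hom_kernel S ar h" and "G \<in> {G \<in> HH S ar. hg_ar G = 0 \<and> h G \<in> F}"
  moreover have "hg_ar G = hg_ar G'" using ranked_equiv_ar[OF ranked_equiv_hom_kernel[OF hom] rel] .
  ultimately show "G' \<in> {G \<in> HH S ar. hg_ar G = 0 \<and> h G \<in> F}" by (simp add: hom_kernel_def)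
qed

theorem theorem3p7:
  fixes S :: "'s set" and ar :: "'s \<Rightarrow> nat" and L :: "'s shg set"
  assumes "L \<subseteq> {G \<in> HH S ar. hg_ar G = 0}"
    and "\<forall>G\<in>L. \<forall>G'. hg_iso G G' \<longrightarrow> G' \<in> L"
  shows
    "((\<exists>(A :: 'b set) arA \<pi>. H_algebra A arA \<pi> \<and> finite_per_arity A arA \<and>
                             recognised_by_alg S ar L A arA \<pi>)
        \<longrightarrow> (\<exists>R. congruence S ar R \<and> finite_index S ar R \<and> rel_recognises L R))
     \<and> ((\<exists>R. congruence S ar R \<and> finite_index S ar R \<and> rel_recognises L R)
        \<longrightarrow> (\<exists>(A :: 's shg set set) arA \<pi>. H_algebra A arA \<pi> \<and> finite_per_arity A arA \<and>
                             recognised_by_alg S ar L A arA \<pi>))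
     \<and> ((\<exists>R. congruence S ar R \<and> finite_index S ar R \<and> rel_recognises L R)
        \<longleftrightarrow> (\<exists>R. ranked_equiv S ar R \<and> HR_compatible S ar R \<and> finite_index S ar R
                  \<and> rel_recognises L R))"
proof (intro conjI impI iffI)
  assume "\<exists>(A :: 'b set) arA \<pi>. H_algebra A arA \<pi> \<and> finite_per_arity A arA \<and> recognised_by_alg S ar L A arA \<pi>"
  then obtain A :: "'b set" and arA \<pi> h F where alg: "H_algebra A arA \<pi>" and fin: "finite_per_arity A arA"
    and hom: "H_hom S ar A arA \<pi> h" and L: "L = {G \<in> HH S ar. hg_ar G = 0 \<and> h G \<in> F}"
    unfolding recognised_by_alg_def by blast
  show "\<exists>R. congruence S ar R \<and> finite_index S ar R \<and> rel_recognises L R"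
    using congruence_hom_kernel[OF alg hom] finite_index_hom_kernel[OF fin hom]
      rel_recognises_hom_kernel[OF hom] L by blast
next
  assume "\<exists>R. congruence S ar R \<and> finite_index S ar R \<and> rel_recognises L R"
  then obtain R where C: "congruence S ar R" and fin: "finite_index S ar R" and rec: "rel_recognises L R"
    by blast
  have RE: "ranked_equiv S ar R" using C unfolding congruence_def by blast
  note HR = congruence_imp_HR_compatible[OF C]
  show "\<exists>(A :: 's shg set set) arA \<pi>. H_algebra A arA \<pi> \<and> finite_per_arity A arA \<and>
      recognised_by_alg S ar L A arA \<pi>"
    using quotient_H_algebra[OF RE HR] finite_per_arity_quotient[OF RE fin]
      recognised_by_quotient[OF RE HR rec assms(1)] by blast
next
  assume "\<exists>R. congruence S ar R \<and> finite_index S ar R \<and> rel_recognises L R"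
  then show "\<exists>R. ranked_equiv S ar R \<and> HR_compatible S ar R \<and> finite_index S ar R \<and> rel_recognises L R"
    using congruence_imp_HR_compatible unfolding congruence_def by blast
next
  assume "\<exists>R. ranked_equiv S ar R \<and> HR_compatible S ar R \<and> finite_index S ar R \<and> rel_recognises L R"
  then show "\<exists>R. congruence S ar R \<and> finite_index S ar R \<and> rel_recognises L R"
    using HR_compatible_imp_congruence by blast
qed

end
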